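(* Let $m,n,d,e,k$ be positive integers with $m=2n$, $e=\gcd(n,d)=\gcd(m,d)$ and $1\le k\le\frac{n}{e}$, with $C$, ${\rm DC}$ and $B_{\vec a}$ as in the context. For even $r$ with $0\le r\le m/e$ and $\varepsilon\in\{1,-1\}$, let $\alpha_{r,\varepsilon}=\#\{0\ne c\in C\mid {\rm DC}(c)=-1+\varepsilon2^{m-\frac{er}{2}}\}$ and \[\beta_r=2^{-m}\#\{\vec a\in\mathbb{F}_{2^n}\times\mathbb{F}_{2^m}^k\mid {\rm rk}(B_{\vec a})=r,\ (a_0,a_1,\dots,a_{k-1})\ne0\}.\] Then for each even $r$ with $0\le r\le m/e$ and each $\varepsilon=\pm1$, \[\alpha_{r,\varepsilon}=\frac12\big(2^{er}+\varepsilon2^{\frac{er}{2}}\big)\beta_r.\]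
   Context: For $\vec a=(a_0,\dots,a_k)\in\mathbb{F}_{2^n}\times\mathbb{F}_{2^m}^k$ define $Q_{\vec a}:\mathbb{F}_{2^m}\to\mathbb{F}_{2^e}$ by \[Q_{\vec a}(x)={\rm Tr}_{\mathbb{F}_{2^n}/\mathbb{F}_{2^e}}\big(a_0x^{2^{nd/e}+1}\big)+\sum_{j=1}^{k-1}{\rm Tr}_{\mathbb{F}_{2^m}/\mathbb{F}_{2^e}}\big(a_jx^{2^{(\frac{n}{e}-j)d}+1}\big)+{\rm Tr}_{\mathbb{F}_{2^m}/\mathbb{F}_{2^e}}(a_kx).\] Here $x^{2^{nd/e}+1}\in\mathbb{F}_{2^n}$. Let $B_{\vec a}(x,y)=Q_{\vec a}(x+y)-Q_{\vec a}(x)-Q_{\vec a}(y)$, an $\mathbb{F}_{2^e}$-bilinear form on the $\mathbb{F}_{2^e}$-space $\mathbb{F}_{2^m}$. Its rank ${\rm rk}(B_{\vec a})$ is $m/e$ minus the $\mathbb{F}_{2^e}$-dimension of its radical. Let $\pi$ be a primitive element of $\mathbb{F}_{2^m}$, let $c_{\vec a}=(c_{\vec a,0},\dots,c_{\vec a,2^m-2})$ with $c_{\vec a,i}={\rm Tr}_{\mathbb{F}_{2^e}/\mathbb{F}_2}(Q_{\vec a}(\pi^{-i}))$, and let $C=\{c_{\vec a}\}$. For $c=(c_0,\dots,c_{2^m-2})\in C$, ${\rm DC}(c)=\sum_{i=0}^{2^m-2}(-1)^{c_i}$. *)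

theory Defs
  imports Complex_Main
begin

text \<open>We work inside a single finite field 'f of cardinality 2^m (playing the role of
 F_{2^m}).  For s dividing m, the subfield F_{2^s} is the set of fixed points of x \<mapsto> x^(2^s).\<close>

definition subfield2 :: "nat \<Rightarrow> 'f::{field,finite} set" where
  "subfield2 s = {x. x ^ (2 ^ s) = x}"

definition trace2 :: "nat \<Rightarrow> nat \<Rightarrow> 'f::{field,finite} \<Rightarrow> 'f" where
  "trace2 a b x = (\<Sum>i<a div b. x ^ (2 ^ (b * i)))"

definition avecs :: "nat \<Rightarrow> nat \<Rightarrow> (nat \<Rightarrow> 'f::{field,finite}) set" where
  "avecs n k = {a. a 0 \<in> subfield2 n \<and> (\<forall>j>k. a j = 0)}"

definition Qform :: "nat \<Rightarrow> nat \<Rightarrow> nat \<Rightarrow> nat \<Rightarrow> nat \<Rightarrow> (nat \<Rightarrow> 'f::{field,finite}) \<Rightarrow> 'f \<Rightarrow> 'f" where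
  "Qform m n d e k a x =
     trace2 n e (a 0 * x ^ (2 ^ (n * d div e) + 1))
     + (\<Sum>j\<in>{1..<k}. trace2 m e (a j * x ^ (2 ^ ((n div e - j) * d) + 1)))
     + trace2 m e (a k * x)"

definition Bform :: "nat \<Rightarrow> nat \<Rightarrow> nat \<Rightarrow> nat \<Rightarrow> nat \<Rightarrow> (nat \<Rightarrow> 'f::{field,finite}) \<Rightarrow> 'f \<Rightarrow> 'f \<Rightarrow> 'f" where
  "Bform m n d e k a x y = Qform m n d e k a (x + y) - Qform m n d e k a x - Qform m n d e k a y"

definition sub_span :: "'f::field set \<Rightarrow> 'f list \<Rightarrow> 'f set" where
  "sub_span K vs = {(\<Sum>i<length vs. c i * vs ! i) | c. \<forall>i. c i \<in> K}"

definition sub_dim :: "'f::field set \<Rightarrow> 'f set \<Rightarrow> nat" where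
  "sub_dim K V = (LEAST l. \<exists>vs. length vs = l \<and> set vs \<subseteq> V \<and> V \<subseteq> sub_span K vs)"

definition radical :: "('f \<Rightarrow> 'f \<Rightarrow> 'f::field) \<Rightarrow> 'f set" where
  "radical B = {x. \<forall>y. B x y = 0}"

definition rankB :: "nat \<Rightarrow> nat \<Rightarrow> nat \<Rightarrow> nat \<Rightarrow> nat \<Rightarrow> (nat \<Rightarrow> 'f::{field,finite}) \<Rightarrow> nat" where
  "rankB m n d e k a = m div e - sub_dim (subfield2 e) (radical (Bform m n d e k a))"

definition primitive_elem :: "'f::{field,finite} \<Rightarrow> bool" where
  "primitive_elem p \<longleftrightarrow> p \<noteq> 0 \<and> (\<forall>x. x \<noteq> 0 \<longrightarrow> (\<exists>i::nat. x = p ^ i))"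

definition codeword :: "nat \<Rightarrow> nat \<Rightarrow> nat \<Rightarrow> nat \<Rightarrow> nat \<Rightarrow> 'f::{field,finite} \<Rightarrow> (nat \<Rightarrow> 'f) \<Rightarrow> (nat \<Rightarrow> 'f)" where
  "codeword m n d e k p a =
     (\<lambda>i. if i < 2 ^ m - 1 then trace2 e 1 (Qform m n d e k a (inverse p ^ i)) else 0)"

definition code :: "nat \<Rightarrow> nat \<Rightarrow> nat \<Rightarrow> nat \<Rightarrow> nat \<Rightarrow> 'f::{field,finite} \<Rightarrow> (nat \<Rightarrow> 'f) set" where
  "code m n d e k p = codeword m n d e k p ` avecs n k"

definition DC :: "nat \<Rightarrow> (nat \<Rightarrow> 'f::field) \<Rightarrow> int" where
  "DC m c = (\<Sum>i<2 ^ m - 1. if c i = 0 then 1 else -1)"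

end

(*
  Write a = (q, b) with b = a_k.  Then c_a lists the values of x |-> Tr(Q_q(x)) + Tr(b x), so
  DC(c_a) + 1 is the Walsh coefficient at b of the quadratic Boolean function Tr o Q_q.  Its
  squared Walsh coefficients are 0 or 2^m |R|, where R is the radical of the polar form; together
  with the values 2^m and 2^(2m) of the sums of the coefficients and of their squares this fixes
  how many b give each of the values +-sqrt(2^m |R|).  The polar form of Q_q is
  Tr_{m/e}(y L_q(x)) for a linearized polynomial L_q, so |R| = 2^(m - e rk(B_q)).  The gcd
  conditions make the exponents of L_q distinct, hence a |-> c_a is injective and c_a = 0 only
  for a = 0.  Summing over q gives the theorem.
*)

theory Submission
  imports Defs "HOL-Library.Cardinality" "HOL-Library.FuncSet"
    "HOL-Computational_Algebra.Polynomial" "HOL-Number_Theory.Cong"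
begin

section \<open>Fields of characteristic two\<close>

lemma power_card_UNIV:
  fixes x :: "'f::{field,finite}"
  shows "x ^ CARD('f) = x"
proof (cases "x = 0")
  case False
  have "x * (\<Prod>y\<in>UNIV-{0}. x * y) = x * x ^ (CARD('f) - 1) * \<Prod>(UNIV-{0})"
    by (simp add: prod.distrib mult_ac)
  also have "x * x ^ (CARD('f) - 1) = x ^ CARD('f)"
    using finite_UNIV_card_ge_0[where ?'a = 'f] by (simp flip: power_Suc)
  also have "(\<Prod>y\<in>UNIV-{0}. x * y) = (\<Prod>y\<in>UNIV-{0}. y)"
    by (rule prod.reindex_bij_witness[of _ "\<lambda>y. y / x" "\<lambda>y. x * y"]) (use False in auto)
  finally show ?thesis
    by simp
qed (use finite_UNIV_card_ge_0[where ?'a = 'f] in auto)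

lemma power_two_power_eq_self_if_card:
  assumes "CARD('f::{field,finite}) = 2 ^ m"
  shows "(x::'f) ^ (2 ^ m) = x"
  using power_card_UNIV[of x] assms by simp

lemma two_eq_zero_if_card_power2:
  assumes "CARD('f::{field,finite}) = 2 ^ m" "m > 0"
  shows "(2::'f) = 0"
proof -
  have "(-1::'f) ^ (2 ^ m) = -1"
    using power_card_UNIV[of "-1::'f"] assms by simp
  moreover have "(-1::'f) ^ (2 ^ m) = 1"
    using assms by simp
  ultimately have "(1::'f) + 1 = 0"
    by (metis add.right_inverse)
  then show ?thesis
    by simp
qed

lemma char2_add_self:
  assumes "(2::'f::field) = 0"
  shows "(x::'f) + x = 0"
  using assms by (metis mult_2 mult_zero_left)

lemma char2_uminus:
  assumes "(2::'f::field) = 0"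
  shows "- (x::'f) = x"
  using char2_add_self[OF assms, of x] by (metis add_eq_0_iff)

lemma char2_diff:
  assumes "(2::'f::field) = 0"
  shows "(x::'f) - y = x + y"
  using char2_uminus[OF assms, of y] by simp

lemma char2_add_eq_0_iff:
  assumes "(2::'f::field) = 0"
  shows "(x::'f) + y = 0 \<longleftrightarrow> y = x"
  by (simp add: add_eq_0_iff char2_uminus[OF assms])

lemma power_two_power_add: "((x::'a::monoid_mult) ^ (2 ^ a)) ^ (2 ^ b) = x ^ (2 ^ (a + b))"
  by (simp add: power_mult[symmetric] power_add)

lemma char2_power_two_power_add:
  assumes "(2::'f::field) = 0"
  shows "((x::'f) + y) ^ (2 ^ s) = x ^ (2 ^ s) + y ^ (2 ^ s)"
proof (induction s)
  case (Suc s)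
  have "(x + y) ^ (2 ^ Suc s) = ((x + y) ^ (2 ^ s)) ^ 2"
    by (simp add: power_mult[symmetric] mult.commute)
  also have "\<dots> = (x ^ (2 ^ s)) ^ 2 + (y ^ (2 ^ s)) ^ 2"
    using Suc assms by (simp add: power2_sum)
  also have "\<dots> = x ^ (2 ^ Suc s) + y ^ (2 ^ Suc s)"
    by (simp add: power_mult[symmetric] mult.commute)
  finally show ?case .
qed simp

lemma char2_power_two_power_sum:
  assumes "(2::'f::field) = 0"
  shows "(\<Sum>i\<in>A. (g i :: 'f)) ^ (2 ^ s) = (\<Sum>i\<in>A. g i ^ (2 ^ s))"
  by (induction A rule: infinite_finite_induct) (simp_all add: char2_power_two_power_add[OF assms])

lemma power_two_power_fixed_mult:
  assumes "(y::'a::monoid_mult) ^ (2 ^ c) = y"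
  shows "y ^ (2 ^ (c * t)) = y"
proof (induction t)
  case (Suc t)
  have "y ^ (2 ^ (c * Suc t)) = (y ^ (2 ^ (c * t))) ^ (2 ^ c)"
    by (simp add: power_two_power_add add.commute)
  then show ?case
    using Suc assms by simp
qed simp

lemma power_two_power_fixed_dvd:
  assumes "(y::'a::monoid_mult) ^ (2 ^ c) = y" "c dvd s"
  shows "y ^ (2 ^ s) = y"
  using power_two_power_fixed_mult[OF assms(1)] assms(2) by (metis dvd_def)

lemma power_two_power_mod:
  assumes "\<And>x::'a::monoid_mult. x ^ (2 ^ m) = x"
  shows "(y::'a) ^ (2 ^ s) = y ^ (2 ^ (s mod m))"
proof -
  have "y ^ (2 ^ s) = (y ^ (2 ^ (m * (s div m)))) ^ (2 ^ (s mod m))"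
    by (simp add: power_two_power_add)
  then show ?thesis
    using power_two_power_fixed_mult[of y m] assms by simp
qed

section \<open>Relative traces\<close>

lemma trace2_zero [simp]: "trace2 a b (0::'f::{field,finite}) = 0"
  unfolding trace2_def by (simp add: power_0_left)

lemma trace2_add:
  assumes "(2::'f::{field,finite}) = 0"
  shows "trace2 a b ((u::'f) + v) = trace2 a b u + trace2 a b v"
  by (simp add: trace2_def char2_power_two_power_add[OF assms] sum.distrib)

lemma trace2_sum:
  assumes "(2::'f::{field,finite}) = 0"
  shows "trace2 a b (\<Sum>i\<in>A. (g i :: 'f)) = (\<Sum>i\<in>A. trace2 a b (g i))"
  by (induction A rule: infinite_finite_induct) (simp_all add: trace2_add[OF assms])

lemma trace2_power_two_power:
  assumes "(2::'f::{field,finite}) = 0"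
  shows "trace2 a b (w::'f) ^ (2 ^ c) = trace2 a b (w ^ (2 ^ c))"
  unfolding trace2_def char2_power_two_power_sum[OF assms] by (simp add: power_two_power_add add.commute)

lemma trace2_frobenius_base_eq:
  assumes "b > 0" "b dvd a" "(w::'f::{field,finite}) ^ (2 ^ a) = w"
  shows "trace2 a b (w ^ (2 ^ b)) = trace2 a b w"
proof (cases "a div b")
  case (Suc M)
  define g where "g j = w ^ (2 ^ (b * j))" for j
  have "g (Suc M) = g 0"
    using Suc assms by (simp add: g_def mult.commute[of b] flip: Suc)
  have "trace2 a b (w ^ (2 ^ b)) = (\<Sum>i<Suc M. g (Suc i))"
    unfolding trace2_def g_def Suc by (simp add: power_two_power_add)
  also have "\<dots> = g 0 + (\<Sum>i<M. g (Suc i))"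
    using \<open>g (Suc M) = g 0\<close> by simp
  also have "\<dots> = trace2 a b w"
    unfolding trace2_def g_def Suc by (simp only: sum.lessThan_Suc_shift)
  finally show ?thesis .
qed (simp add: trace2_def)

lemma trace2_frobenius_dvd_eq:
  assumes "b > 0" "b dvd a" "(w::'f::{field,finite}) ^ (2 ^ a) = w" "b dvd s"
  shows "trace2 a b (w ^ (2 ^ s)) = trace2 a b w"
proof -
  have "trace2 a b (w ^ (2 ^ (b * t))) = trace2 a b w" for t
  proof (induction t)
    case (Suc t)
    have fixed: "(w ^ (2 ^ (b * t))) ^ (2 ^ a) = w ^ (2 ^ (b * t))"
      by (metis assms(3) power_two_power_add add.commute)
    have "w ^ (2 ^ (b * Suc t)) = (w ^ (2 ^ (b * t))) ^ (2 ^ b)"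
      by (simp add: power_two_power_add add.commute)
    then show ?case
      using trace2_frobenius_base_eq[OF assms(1,2) fixed] Suc by simp
  qed simp
  then show ?thesis
    using assms(4) by (metis dvd_def)
qed

lemma trace2_in_base_field:
  assumes "(2::'f::{field,finite}) = 0" "b > 0" "b dvd a" "(w::'f) ^ (2 ^ a) = w"
  shows "trace2 a b w ^ (2 ^ b) = trace2 a b w"
  using trace2_power_two_power[OF assms(1)] trace2_frobenius_base_eq[OF assms(2-4)] by simp

lemma trace2_absolute_0_or_1:
  assumes "(2::'f::{field,finite}) = 0" "(w::'f) ^ (2 ^ a) = w"
  shows "trace2 a 1 w = 0 \<or> trace2 a 1 w = 1"
proof -
  have "trace2 a 1 w ^ 2 = trace2 a 1 w"
    using trace2_in_base_field[OF assms(1), of 1 a w] assms(2) by simp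
  then have "trace2 a 1 w * (trace2 a 1 w - 1) = 0"
    by (simp add: power2_eq_square algebra_simps)
  then show ?thesis
    by simp
qed

lemma trace2_trans:
  assumes "(2::'f::{field,finite}) = 0" "e > 0" "e dvd a"
  shows "trace2 e 1 (trace2 a e (w::'f)) = trace2 a 1 w"
proof -
  define A where "A = a div e"
  have aA: "a = e * A"
    using assms unfolding A_def by simp
  have "trace2 e 1 (trace2 a e w) = (\<Sum>(i,j)\<in>{..<e} \<times> {..<A}. w ^ (2 ^ (e * j + i)))"
    unfolding trace2_def A_def char2_power_two_power_sum[OF assms(1)] sum.cartesian_product[symmetric]
    by (simp add: power_two_power_add)
  also have "\<dots> = (\<Sum>l<a. w ^ (2 ^ l))"
  proof (rule sum.reindex_bij_witness[of _ "\<lambda>l. (l mod e, l div e)" "\<lambda>(i,j). e * j + i"])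
    fix l assume "l \<in> {..<a}"
    then show "(l mod e, l div e) \<in> {..<e} \<times> {..<A}"
      using assms aA by (auto simp: less_mult_imp_div_less mult.commute)
  next
    fix ij assume "ij \<in> {..<e} \<times> {..<A}"
    then obtain i j where ij: "ij = (i, j)" "i < e" "j < A"
      by auto
    then have "e * j + i < e * (j + 1)"
      by simp
    also have "\<dots> \<le> e * A"
      using ij by (intro mult_le_mono2) simp
    finally show "(case ij of (i, j) \<Rightarrow> e * j + i) \<in> {..<a}"
      using ij aA by simp
  qed (use assms in auto)
  finally show ?thesis
    unfolding trace2_def by simp
qed

lemma sum_lessThan_add_split:
  "(\<Sum>i<(a::nat) + b. g i) = (\<Sum>i<a. g i) + (\<Sum>i<b. g (a + i))"
  by (induction b) (simp_all add: add.assoc)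

lemma trace2_double_degree:
  assumes "(2::'f::{field,finite}) = 0" "e > 0" "e dvd n"
  shows "trace2 (2 * n) e (w::'f) = trace2 n e (w + w ^ (2 ^ n))"
proof -
  define N where "N = n div e"
  have nN: "n = e * N"
    using assms unfolding N_def by simp
  have "2 * n div e = N + N"
    using nN assms(2) by simp
  then have "trace2 (2 * n) e w = (\<Sum>i<N. w ^ (2 ^ (e * i))) + (\<Sum>i<N. w ^ (2 ^ (e * (N + i))))"
    unfolding trace2_def by (simp add: sum_lessThan_add_split)
  also have "(\<Sum>i<N. w ^ (2 ^ (e * (N + i)))) = (\<Sum>i<N. (w ^ (2 ^ n)) ^ (2 ^ (e * i)))"
    by (simp add: power_two_power_add nN distrib_left)
  finally show ?thesis
    unfolding trace2_add[OF assms(1)] by (simp add: trace2_def N_def)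
qed

section \<open>Linearized polynomials and the size of subfields\<close>

lemma linearized_poly_coeff_eq_zero:
  fixes c :: "'i \<Rightarrow> 'f::{field,finite}" and g :: "'i \<Rightarrow> nat"
  assumes card: "CARD('f) = 2 ^ m" and "finite I" and inj: "inj_on g I"
    and lt: "\<And>i. i \<in> I \<Longrightarrow> g i < m"
    and vanish: "\<And>x. (\<Sum>i\<in>I. c i * x ^ (2 ^ g i)) = 0" and "i0 \<in> I"
  shows "c i0 = 0"
proof -
  define P where "P = (\<Sum>i\<in>I. monom (c i) (2 ^ g i))"
  have coeff_P: "coeff P j = (\<Sum>i\<in>I. if 2 ^ g i = j then c i else 0)" for j
    unfolding P_def by (simp add: coeff_sum coeff_monom)
  have "P = 0"
  proof (rule ccontr)
    assume "P \<noteq> 0"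
    have "degree P \<le> 2 ^ m - 1"
    proof (rule degree_le, intro allI impI)
      fix j :: nat assume "2 ^ m - 1 < j"
      have "2 ^ g i \<noteq> j" if "i \<in> I" for i
      proof -
        have "(2::nat) ^ g i < 2 ^ m"
          using lt[OF that] by simp
        then show ?thesis
          using \<open>2 ^ m - 1 < j\<close> by linarith
      qed
      then show "coeff P j = 0"
        unfolding coeff_P by (intro sum.neutral) auto
    qed
    moreover have "{x. poly P x = 0} = UNIV"
      using vanish by (simp add: P_def poly_sum poly_monom)
    ultimately have "CARD('f) \<le> 2 ^ m - 1"
      using card_poly_roots_bound[OF \<open>P \<noteq> 0\<close>] by simp
    moreover have "(0::nat) < 2 ^ m"
      by simp
    ultimately show False
      using card by linarith
  qed
  moreover have "coeff P (2 ^ g i0) = (\<Sum>i\<in>I. if i = i0 then c i else 0)"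
    unfolding coeff_P using inj \<open>i0 \<in> I\<close> by (intro sum.cong) (auto dest: inj_onD)
  ultimately show ?thesis
    using \<open>finite I\<close> \<open>i0 \<in> I\<close> by simp
qed

lemma trace2_nondegenerate:
  assumes card: "CARD('f::{field,finite}) = 2 ^ m" and "b > 0" "b dvd m" "m > 0"
    and "(z::'f) \<noteq> 0"
  shows "\<exists>y. trace2 m b (y * z) \<noteq> 0"
proof -
  have "\<exists>w::'f. trace2 m b w \<noteq> 0"
  proof (rule ccontr)
    assume "\<not> ?thesis"
    then have vanish: "(\<Sum>i\<in>{..<m div b}. (1::'f) * x ^ (2 ^ (b * i))) = 0" for x
      by (simp add: trace2_def)
    have "(1::'f) = 0"
    proof (rule linearized_poly_coeff_eq_zero[OF card _ _ _ vanish, of 0])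
      show "inj_on ((*) b) {..<m div b}"
        using assms by (simp add: inj_on_def)
      show "b * i < m" if "i \<in> {..<m div b}" for i
        using that assms by (metis dvd_mult_div_cancel lessThan_iff nat_mult_less_cancel_disj)
    qed (use assms in \<open>auto simp: dvd_div_eq_0_iff\<close>)
    then show False
      by simp
  qed
  then obtain w :: 'f where "trace2 m b w \<noteq> 0"
    by blast
  then show ?thesis
    using \<open>z \<noteq> 0\<close> by (intro exI[of _ "w / z"]) simp
qed

lemma card_UNIV_eq_card_range_mult_card_kernel:
  fixes T :: "'f::{field,finite} \<Rightarrow> 'f"
  assumes "(2::'f) = 0" and add: "\<And>x y. T (x + y) = T x + T y"
  shows "CARD('f) = card (range T) * card {x. T x = 0}"
proof -
  have "CARD('f) = (\<Sum>v\<in>range T. card {x. T x = v})"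
    by (subst card_UN_disjoint[symmetric]) (auto intro: arg_cong[where f = card])
  also have "\<dots> = (\<Sum>v\<in>range T. card {x. T x = 0})"
  proof (rule sum.cong)
    fix v assume "v \<in> range T"
    then obtain x0 where x0: "v = T x0"
      by auto
    have "bij_betw (\<lambda>x. x + x0) {x. T x = 0} {x. T x = v}"
      by (rule bij_betw_byWitness[of _ "\<lambda>y. y + x0"])
        (auto simp: add x0 add.assoc char2_add_self[OF assms(1)])
    then show "card {x. T x = v} = card {x. T x = 0}"
      by (simp add: bij_betw_same_card)
  qed simp
  finally show ?thesis
    by simp
qed

lemma card_trace2_kernel_le:
  assumes "m > 0" "e > 0" "e dvd m"
  shows "card {x::'f::{field,finite}. trace2 m e x = 0} \<le> 2 ^ (m - e)"
proof -
  define M where "M = m div e"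
  have m_eq: "m = e * M" and "M > 0"
    using assms unfolding M_def by (auto simp: dvd_div_eq_0_iff)
  define P :: "'f poly" where "P = (\<Sum>i<M. monom 1 (2 ^ (e * i)))"
  have coeff_P: "coeff P j = (\<Sum>i<M. if 2 ^ (e * i) = j then 1 else 0)" for j
    unfolding P_def by (simp add: coeff_sum coeff_monom)
  have "coeff P 1 = (\<Sum>i<M. if i = 0 then 1 else 0)"
    unfolding coeff_P using assms by (intro sum.cong) auto
  then have "P \<noteq> 0"
    using \<open>M > 0\<close> by auto
  have "degree P \<le> 2 ^ (m - e)"
  proof (rule degree_le, intro allI impI)
    fix j :: nat assume j: "2 ^ (m - e) < j"
    have "2 ^ (e * i) < j" if "i < M" for i
    proof -
      have "e * (i + 1) \<le> e * M"
        using that by (intro mult_le_mono2) simp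
      then have "e * i \<le> m - e"
        using m_eq by simp
      then have "(2::nat) ^ (e * i) \<le> 2 ^ (m - e)"
        by simp
      then show ?thesis
        using j by linarith
    qed
    then show "coeff P j = 0"
      unfolding coeff_P by (intro sum.neutral) auto
  qed
  moreover have "{x. trace2 m e x = 0} = {x. poly P x = 0}"
    unfolding P_def trace2_def M_def by (simp add: poly_sum poly_monom)
  ultimately show ?thesis
    using card_poly_roots_bound[OF \<open>P \<noteq> 0\<close>] by simp
qed

lemma card_subfield2:
  assumes card: "CARD('f::{field,finite}) = 2 ^ m" and "m > 0" "e > 0" "e dvd m"
  shows "card (subfield2 e :: 'f set) = 2 ^ e"
proof (rule antisym)
  define Q :: "'f poly" where "Q = monom 1 (2 ^ e) - monom 1 1"
  have "(1::nat) < 2 ^ e"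
    using \<open>e > 0\<close> one_less_power[of "2::nat" e] by simp
  then have "coeff Q (2 ^ e) = 1"
    by (simp add: Q_def coeff_monom)
  then have "Q \<noteq> 0"
    by auto
  moreover have "degree Q \<le> 2 ^ e"
    by (rule degree_le) (auto simp: Q_def coeff_monom)
  moreover have "subfield2 e = {x::'f. poly Q x = 0}"
    by (simp add: subfield2_def Q_def poly_monom)
  ultimately show "card (subfield2 e :: 'f set) \<le> 2 ^ e"
    using card_poly_roots_bound[OF \<open>Q \<noteq> 0\<close>] by simp
next
  txt \<open>The trace onto \<open>subfield2 e\<close> is additive with a kernel of at most \<open>2\<^sup>m\<^sup>-\<^sup>e\<close> elements.\<close>
  have char2: "(2::'f) = 0"
    using two_eq_zero_if_card_power2[OF card \<open>m > 0\<close>] .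
  have range_trace: "range (trace2 m e) \<subseteq> (subfield2 e :: 'f set)"
    unfolding subfield2_def
    using trace2_in_base_field[OF char2 assms(3,4) power_two_power_eq_self_if_card[OF card]] by auto
  have "(2::nat) ^ m = card (range (trace2 m e :: 'f \<Rightarrow> 'f)) * card {x::'f. trace2 m e x = 0}"
    using card_UNIV_eq_card_range_mult_card_kernel[OF char2, of "trace2 m e"] card
    by (simp add: trace2_add[OF char2])
  also have "\<dots> \<le> card (subfield2 e :: 'f set) * 2 ^ (m - e)"
    by (intro mult_le_mono card_mono card_trace2_kernel_le range_trace assms) simp
  finally have "(2::nat) ^ e * 2 ^ (m - e) \<le> card (subfield2 e :: 'f set) * 2 ^ (m - e)"
    using assms by (simp flip: power_add add: dvd_imp_le)
  then show "2 ^ e \<le> card (subfield2 e :: 'f set)"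
    by simp
qed

section \<open>Subspaces over a subfield\<close>

definition is_subfield :: "'f::field set \<Rightarrow> bool" where
  "is_subfield K \<longleftrightarrow> 0 \<in> K \<and> 1 \<in> K \<and> (\<forall>x\<in>K. \<forall>y\<in>K. x + y \<in> K \<and> x * y \<in> K)
     \<and> (\<forall>x\<in>K. - x \<in> K \<and> inverse x \<in> K)"

definition is_subspace :: "'f::field set \<Rightarrow> 'f set \<Rightarrow> bool" where
  "is_subspace K V \<longleftrightarrow> 0 \<in> V \<and> (\<forall>x\<in>V. \<forall>y\<in>V. x + y \<in> V) \<and> (\<forall>l\<in>K. \<forall>x\<in>V. l * x \<in> V)"

lemma is_subfield_zero: "is_subfield K \<Longrightarrow> 0 \<in> K"
  by (simp add: is_subfield_def)

lemma is_subfieldD: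
  assumes "is_subfield K" "x \<in> K" "y \<in> K"
  shows "x + y \<in> K" "x * y \<in> K" "x - y \<in> K" "x / y \<in> K"
proof -
  have closed: "\<forall>x\<in>K. \<forall>y\<in>K. x + y \<in> K \<and> x * y \<in> K"
    and inverses: "\<forall>x\<in>K. - x \<in> K \<and> inverse x \<in> K"
    using assms(1) unfolding is_subfield_def by blast+
  show "x + y \<in> K" "x * y \<in> K"
    using closed assms(2,3) by blast+
  have "x + - y \<in> K" "x * inverse y \<in> K"
    using closed inverses assms(2,3) by blast+
  then show "x - y \<in> K" "x / y \<in> K"
    by (simp_all only: diff_conv_add_uminus divide_inverse)
qed

lemma subspace_sum_mem:
  assumes "is_subspace K V" "\<And>i. i \<in> A \<Longrightarrow> f i \<in> V"
  shows "sum f A \<in> V"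
  using assms(2)
proof (induction A rule: infinite_finite_induct)
  case (insert x F)
  then show ?case
    using assms(1) unfolding is_subspace_def by simp
qed (use assms(1) in \<open>simp_all add: is_subspace_def\<close>)

lemma ex_spanning_list:
  fixes V :: "'f::field set"
  assumes "finite V" "is_subfield K"
  shows "\<exists>vs. set vs \<subseteq> V \<and> V \<subseteq> sub_span K vs"
proof -
  obtain vs where vs: "set vs = V"
    using finite_list[OF assms(1)] by blast
  have "vs ! i \<in> sub_span K vs" if "i < length vs" for i
  proof -
    define c :: "nat \<Rightarrow> 'f" where "c j = (if j = i then 1 else 0)" for j
    have "(\<Sum>j<length vs. c j * vs ! j) = (\<Sum>j<length vs. if j = i then vs ! j else 0)"
      by (intro sum.cong) (simp_all add: c_def)
    also have "\<dots> = vs ! i"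
      using that by simp
    finally have "vs ! i = (\<Sum>j<length vs. c j * vs ! j)" ..
    moreover have "\<forall>j. c j \<in> K"
      using assms(2) by (simp add: c_def is_subfield_def)
    ultimately show ?thesis
      unfolding sub_span_def by blast
  qed
  then have "V \<subseteq> sub_span K vs"
    using vs by (auto simp: in_set_conv_nth)
  then show ?thesis
    using vs by blast
qed

lemma sum_lessThan_remove_nth:
  assumes "j < D"
  shows "(\<Sum>i<D. g i) = g j + (\<Sum>l<D - 1. g (if l < j then l else Suc l))"
proof -
  have "(\<Sum>i<D. g i) = g j + (\<Sum>i\<in>{..<D} - {j}. g i)"
    using assms by (simp add: sum.remove)
  also have "(\<Sum>i\<in>{..<D} - {j}. g i) = (\<Sum>l<D - 1. g (if l < j then l else Suc l))"
    by (rule sum.reindex_bij_witness[of _ "\<lambda>l. if l < j then l else Suc l"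
          "\<lambda>i. if i < j then i else i - 1"]) (use assms in auto)
  finally show ?thesis .
qed

lemma sub_span_remove_dependent:
  assumes K: "is_subfield K" and j: "j < length vs"
    and \<delta>: "\<forall>i. \<delta> i \<in> K" "\<delta> j \<noteq> 0" "(\<Sum>i<length vs. \<delta> i * vs ! i) = 0"
  shows "sub_span K vs \<subseteq> sub_span K (take j vs @ drop (Suc j) vs)"
proof
  define vs' where "vs' = take j vs @ drop (Suc j) vs"
  define idx where "idx l = (if l < j then l else Suc l)" for l
  have len': "length vs' = length vs - 1"
    using j by (simp add: vs'_def)
  have nth': "vs' ! l = vs ! idx l" if "l < length vs - 1" for l
    using that j by (auto simp: vs'_def idx_def nth_append min_def)
  fix v assume "v \<in> sub_span K vs"
  then obtain a where v: "v = (\<Sum>i<length vs. a i * vs ! i)" and a: "\<forall>i. a i \<in> K"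
    unfolding sub_span_def by blast
  define \<mu> where "\<mu> = a j / \<delta> j"
  define b where "b i = a i - \<mu> * \<delta> i" for i
  have bK: "b i \<in> K" for i
    unfolding b_def \<mu>_def using a \<delta>(1) by (intro is_subfieldD[OF K]) auto
  have "b j = 0"
    using \<delta>(2) by (simp add: b_def \<mu>_def)
  have "v = (\<Sum>i<length vs. a i * vs ! i) - \<mu> * (\<Sum>i<length vs. \<delta> i * vs ! i)"
    using v \<delta>(3) by simp
  also have "\<dots> = (\<Sum>i<length vs. b i * vs ! i)"
    unfolding b_def by (simp add: sum_distrib_left left_diff_distrib sum_subtractf mult.assoc)
  also have "\<dots> = (\<Sum>l<length vs - 1. b (idx l) * vs ! idx l)"
    using sum_lessThan_remove_nth[OF j, of "\<lambda>i. b i * vs ! i"] \<open>b j = 0\<close>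
    unfolding idx_def by simp
  also have "\<dots> = (\<Sum>l<length vs'. b (idx l) * vs' ! l)"
    using nth' len' by (intro sum.cong) auto
  finally have "v = (\<Sum>l<length vs'. b (idx l) * vs' ! l)" .
  moreover have "\<forall>l. b (idx l) \<in> K"
    using bK by blast
  ultimately show "v \<in> sub_span K vs'"
    unfolding sub_span_def mem_Collect_eq by (intro exI[of _ "\<lambda>l. b (idx l)"]) simp
qed

lemma sub_dim_spanning_list:
  fixes V :: "'f::field set"
  assumes "finite V" "is_subfield K"
  obtains vs where "length vs = sub_dim K V" "set vs \<subseteq> V" "V \<subseteq> sub_span K vs"
    and "\<And>ws. set ws \<subseteq> V \<Longrightarrow> V \<subseteq> sub_span K ws \<Longrightarrow> sub_dim K V \<le> length ws"
proof -
  define spans where "spans l \<longleftrightarrow> (\<exists>vs. length vs = l \<and> set vs \<subseteq> V \<and> V \<subseteq> sub_span K vs)" for l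
  have sub_dim_Least: "sub_dim K V = (LEAST l. spans l)"
    unfolding sub_dim_def spans_def ..
  have "\<exists>l. spans l"
    using ex_spanning_list[OF assms] unfolding spans_def by auto
  then have "spans (sub_dim K V)"
    unfolding sub_dim_Least by (rule LeastI_ex)
  moreover have "sub_dim K V \<le> length ws" if "set ws \<subseteq> V" "V \<subseteq> sub_span K ws" for ws
    unfolding sub_dim_Least using that by (intro Least_le) (auto simp: spans_def)
  ultimately show ?thesis
    using that unfolding spans_def by blast
qed

text \<open>A spanning list of minimal length is linearly independent: otherwise
  \<open>sub_span_remove_dependent\<close> would produce a shorter one.\<close>

lemma inj_on_combination_minimal:
  fixes V :: "'f::field set"
  assumes K: "is_subfield K" and vs: "set vs \<subseteq> V" "V \<subseteq> sub_span K vs"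
    and minimal: "\<And>ws. set ws \<subseteq> V \<Longrightarrow> V \<subseteq> sub_span K ws \<Longrightarrow> length vs \<le> length ws"
  shows "inj_on (\<lambda>c. \<Sum>i<length vs. c i * vs ! i) (PiE {..<length vs} (\<lambda>_. K))"
proof
  fix c c' assume c: "c \<in> PiE {..<length vs} (\<lambda>_. K)" and c': "c' \<in> PiE {..<length vs} (\<lambda>_. K)"
    and eq: "(\<Sum>i<length vs. c i * vs ! i) = (\<Sum>i<length vs. c' i * vs ! i)"
  show "c = c'"
  proof (rule ccontr)
    assume "c \<noteq> c'"
    then obtain j where j: "j < length vs" "c j \<noteq> c' j"
      using c c' by (metis PiE_ext lessThan_iff)
    define \<delta> where "\<delta> i = (if i < length vs then c i - c' i else 0)" for i
    have "\<delta> i \<in> K" for i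
    proof (cases "i < length vs")
      case True
      then have "c i \<in> K" "c' i \<in> K"
        using c c' by (auto simp: PiE_iff)
      then show ?thesis
        using True is_subfieldD(3)[OF K] by (simp add: \<delta>_def)
    qed (use K in \<open>simp add: \<delta>_def is_subfield_zero\<close>)
    moreover have "(\<Sum>i<length vs. \<delta> i * vs ! i) = 0"
      using eq unfolding \<delta>_def by (simp add: left_diff_distrib sum_subtractf)
    moreover have "\<delta> j \<noteq> 0"
      using j by (simp add: \<delta>_def)
    ultimately have "sub_span K vs \<subseteq> sub_span K (take j vs @ drop (Suc j) vs)"
      using sub_span_remove_dependent[OF K j(1)] by blast
    then have "length vs \<le> length (take j vs @ drop (Suc j) vs)"
      using vs set_take_subset set_drop_subset by (intro minimal) fastforce+
    then show False
      using j by simp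
  qed
qed

lemma card_subspace:
  fixes K V :: "'f::{field,finite} set"
  assumes K: "is_subfield K" and V: "is_subspace K V"
  shows "card V = card K ^ sub_dim K V"
proof -
  obtain vs where vs: "length vs = sub_dim K V" "set vs \<subseteq> V" "V \<subseteq> sub_span K vs"
    and minimal: "\<And>ws. set ws \<subseteq> V \<Longrightarrow> V \<subseteq> sub_span K ws \<Longrightarrow> sub_dim K V \<le> length ws"
    using sub_dim_spanning_list[OF finite K, of V] by blast
  define D where "D = length vs"
  define combination where "combination c = (\<Sum>i<D. c i * vs ! i)" for c
  define C :: "(nat \<Rightarrow> 'f) set" where "C = PiE {..<D} (\<lambda>_. K)"
  have "combination ` C = V"
  proof
    show "combination ` C \<subseteq> V"
    proof
      fix v assume "v \<in> combination ` C"
      then obtain c where "c \<in> C" "v = combination c"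
        by blast
      moreover have "vs ! i \<in> V" if "i < D" for i
        using vs(2) that by (metis D_def nth_mem subsetD)
      ultimately have "c i * vs ! i \<in> V" if "i < D" for i
        using V that unfolding is_subspace_def C_def by (simp add: PiE_iff)
      then show "v \<in> V"
        unfolding \<open>v = combination c\<close> combination_def by (intro subspace_sum_mem[OF V]) simp
    qed
    show "V \<subseteq> combination ` C"
    proof
      fix v assume "v \<in> V"
      then obtain c where v: "v = (\<Sum>i<D. c i * vs ! i)" and c: "\<forall>i. c i \<in> K"
        using vs unfolding sub_span_def D_def by blast
      have "restrict c {..<D} \<in> C"
        using c by (simp add: C_def)
      moreover have "combination (restrict c {..<D}) = v"
        unfolding combination_def v by (intro sum.cong) auto
      ultimately show "v \<in> combination ` C"
        by force
    qed
  qed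
  moreover have "inj_on combination C"
    unfolding combination_def C_def D_def using vs minimal
    by (intro inj_on_combination_minimal[OF K]) auto
  ultimately have "card V = card C"
    using card_image by fastforce
  then show ?thesis
    unfolding C_def D_def vs(1) by (simp add: card_PiE)
qed

section \<open>The Walsh spectrum of a quadratic Boolean function\<close>

text \<open>For \<open>v \<in> {0, 1}\<close> in a field of characteristic two, \<open>chi v = (-1) ^ v\<close>.\<close>

definition chi :: "'f::field \<Rightarrow> real" where
  "chi v = (if v = 0 then 1 else -1)"

lemma chi_zero [simp]: "chi 0 = 1" and chi_one [simp]: "chi 1 = -1"
  by (simp_all add: chi_def)

lemma chi_mult_self [simp]: "chi v * chi v = 1"
  by (simp add: chi_def)

lemma char2_add_0_or_1:
  assumes "(2::'f::field) = 0" "(u::'f) = 0 \<or> u = 1" "v = 0 \<or> v = 1"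
  shows "u + v = 0 \<or> u + v = 1"
  using assms char2_add_self[OF assms(1), of 1] by auto

lemma chi_add:
  assumes "(2::'f::field) = 0" "(u::'f) = 0 \<or> u = 1" "v = 0 \<or> v = 1"
  shows "chi (u + v) = chi u * chi v"
  using assms char2_add_self[OF assms(1), of 1] by (auto simp: chi_def)

lemma sum_chi_additive:
  fixes \<phi> :: "'f::{field,finite} \<Rightarrow> 'f"
  assumes char2: "(2::'f) = 0"
    and closed: "\<And>x y. x \<in> A \<Longrightarrow> y \<in> A \<Longrightarrow> x + y \<in> A"
    and zero_or_one: "\<And>x. x \<in> A \<Longrightarrow> \<phi> x = 0 \<or> \<phi> x = 1"
    and additive: "\<And>x y. x \<in> A \<Longrightarrow> y \<in> A \<Longrightarrow> \<phi> (x + y) = \<phi> x + \<phi> y"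
  shows "(\<Sum>x\<in>A. chi (\<phi> x)) = (if \<forall>x\<in>A. \<phi> x = 0 then real (card A) else 0)"
proof (cases "\<forall>x\<in>A. \<phi> x = 0")
  case True
  then show ?thesis
    by (simp add: chi_def)
next
  case False
  then obtain x0 where x0: "x0 \<in> A" "\<phi> x0 = 1"
    using zero_or_one by blast
  have "(\<Sum>x\<in>A. chi (\<phi> x)) = (\<Sum>x\<in>A. chi (\<phi> (x + x0)))"
    by (rule sum.reindex_bij_witness[of _ "\<lambda>x. x + x0" "\<lambda>x. x + x0"])
      (use closed x0 in \<open>auto simp: add.assoc char2_add_self[OF char2]\<close>)
  also have "\<dots> = (\<Sum>x\<in>A. - chi (\<phi> x))"
    using x0 by (intro sum.cong) (simp_all add: additive chi_add[OF char2 zero_or_one])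
  finally have "(\<Sum>x\<in>A. chi (\<phi> x)) = 0"
    by (simp add: sum_negf)
  then show ?thesis
    by (simp only: False if_False)
qed

text \<open>In the application \<open>f = Tr\<^sub>e\<^sub>/\<^sub>1 \<circ> Q\<^sub>a\<close> and \<open>tr = Tr\<^sub>m\<^sub>/\<^sub>1\<close>.\<close>

locale quadratic_boolean_function =
  fixes f tr :: "'f::{field,finite} \<Rightarrow> 'f"
  assumes char2: "(2::'f) = 0"
    and f_0_or_1: "\<And>x. f x = 0 \<or> f x = 1" and f_zero: "f 0 = 0"
    and polar_additive: "\<And>x x' y. f (x + x' + y) + f (x + x') + f y
                 = (f (x + y) + f x + f y) + (f (x' + y) + f x' + f y)"
    and tr_0_or_1: "\<And>x. tr x = 0 \<or> tr x = 1"
    and tr_add: "\<And>x y. tr (x + y) = tr x + tr y"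
    and tr_nondegenerate: "\<And>z. z \<noteq> 0 \<Longrightarrow> \<exists>y. tr (y * z) \<noteq> 0"
begin

definition polar :: "'f \<Rightarrow> 'f \<Rightarrow> 'f" where
  "polar x y = f (x + y) + f x + f y"

definition walsh :: "'f \<Rightarrow> real" where
  "walsh b = (\<Sum>x\<in>UNIV. chi (f x + tr (b * x)))"

definition rad :: "'f set" where
  "rad = {x. \<forall>y. polar x y = 0}"

lemma tr_zero: "tr 0 = 0"
  using tr_add[of 0 0] by (metis add.right_neutral add_left_cancel)

lemma polar_0_or_1: "polar x y = 0 \<or> polar x y = 1"
  unfolding polar_def by (intro char2_add_0_or_1[OF char2] f_0_or_1)

lemma polar_add_left: "polar (x + x') y = polar x y + polar x' y"
  using polar_additive[of x x' y] by (simp add: polar_def add.assoc)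

lemma polar_commute: "polar x y = polar y x"
  by (simp add: polar_def add.commute add.left_commute)

lemma sum_chi_tr: "(\<Sum>b\<in>UNIV. chi (tr (b * x))) = (if x = 0 then real CARD('f) else 0)"
proof -
  have "(\<Sum>b\<in>UNIV. chi (tr (b * x))) = (if \<forall>b. tr (b * x) = 0 then real CARD('f) else 0)"
    by (subst sum_chi_additive[OF char2]) (auto simp: tr_0_or_1 tr_add distrib_right)
  moreover have "(\<forall>b. tr (b * x) = 0) \<longleftrightarrow> x = 0"
    using tr_nondegenerate by (auto simp: tr_zero)
  ultimately show ?thesis
    by simp
qed

lemma walsh_eq: "walsh b = (\<Sum>x\<in>UNIV. chi (f x) * chi (tr (b * x)))"
  unfolding walsh_def by (intro sum.cong refl chi_add[OF char2 f_0_or_1 tr_0_or_1])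

lemma sum_walsh: "(\<Sum>b\<in>UNIV. walsh b) = real CARD('f)"
proof -
  have "(\<Sum>b\<in>UNIV. walsh b) = (\<Sum>x\<in>UNIV. chi (f x) * (\<Sum>b\<in>UNIV. chi (tr (b * x))))"
    unfolding walsh_eq by (subst sum.swap) (simp add: sum_distrib_left)
  also have "\<dots> = (\<Sum>x\<in>UNIV. if x = 0 then chi (f x) * real CARD('f) else 0)"
    by (simp add: sum_chi_tr if_distrib[of "\<lambda>v. _ * v"] cong: if_cong)
  finally show ?thesis
    by (simp add: f_zero chi_def)
qed

lemma sum_walsh_squared: "(\<Sum>b\<in>UNIV. walsh b * walsh b) = real CARD('f) * real CARD('f)"
proof -
  have chi_tr: "chi (tr (b * x)) * chi (tr (b * y)) = chi (tr (b * (x + y)))" for b x y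
    using chi_add[OF char2 tr_0_or_1 tr_0_or_1, of "b * x" "b * y"] by (simp add: tr_add distrib_left)
  have "(\<Sum>b\<in>UNIV. walsh b * walsh b)
      = (\<Sum>b\<in>UNIV. \<Sum>x\<in>UNIV. \<Sum>y\<in>UNIV. chi (f x) * chi (f y) * chi (tr (b * (x + y))))"
    unfolding walsh_eq sum_product by (simp add: chi_tr[symmetric] mult_ac)
  also have "\<dots> = (\<Sum>x\<in>UNIV. \<Sum>y\<in>UNIV. \<Sum>b\<in>UNIV. chi (f x) * chi (f y) * chi (tr (b * (x + y))))"
    by (subst sum.swap, rule sum.cong[OF refl], rule sum.swap)
  also have "\<dots> = (\<Sum>x\<in>UNIV. \<Sum>y\<in>UNIV. chi (f x) * chi (f y) * (if y = x then real CARD('f) else 0))"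
    by (simp add: sum_distrib_left[symmetric] sum_chi_tr char2_add_eq_0_iff[OF char2])
  finally show ?thesis
    by (simp add: if_distrib[of "\<lambda>v. _ * v"] cong: if_cong)
qed

lemma add_mem_rad: "x \<in> rad \<Longrightarrow> y \<in> rad \<Longrightarrow> x + y \<in> rad"
  unfolding rad_def by (simp add: polar_add_left)

text \<open>Substitute \<open>y = x + z\<close> in the double sum; the inner sum over \<open>x\<close> of
  \<open>chi (polar x z)\<close> then vanishes unless \<open>z \<in> rad\<close>.\<close>

lemma walsh_squared_eq_sum_rad:
  "walsh b * walsh b = real CARD('f) * (\<Sum>z\<in>rad. chi (f z + tr (b * z)))"
proof -
  define g where "g z = f z + tr (b * z)" for z
  have g_0_or_1: "g z = 0 \<or> g z = 1" for z
    unfolding g_def by (intro char2_add_0_or_1[OF char2] f_0_or_1 tr_0_or_1)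
  have g_add: "g (x + z) = polar x z + (g x + g z)" for x z
  proof -
    have "polar x z + f x + f z = f (x + z) + (f x + f x) + (f z + f z)"
      unfolding polar_def by (simp add: add_ac)
    then have "f (x + z) = polar x z + f x + f z"
      by (simp add: char2_add_self[OF char2])
    then show ?thesis
      unfolding g_def by (simp add: tr_add distrib_left add_ac)
  qed
  have chi_g_add: "chi (g x) * chi (g (x + z)) = chi (g z) * chi (polar x z)" for x z
    unfolding g_add using chi_mult_self[of "g x"]
    by (simp add: chi_add[OF char2 polar_0_or_1 char2_add_0_or_1[OF char2 g_0_or_1 g_0_or_1]]
        chi_add[OF char2 g_0_or_1 g_0_or_1] mult_ac)
  have sum_chi_polar: "(\<Sum>x\<in>UNIV. chi (polar x z)) = (if z \<in> rad then real CARD('f) else 0)" for z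
  proof -
    have "(\<Sum>x\<in>UNIV. chi (polar x z)) = (if \<forall>x. polar x z = 0 then real CARD('f) else 0)"
      by (subst sum_chi_additive[OF char2]) (auto simp: polar_0_or_1 polar_add_left)
    then show ?thesis
      unfolding rad_def by (simp add: polar_commute)
  qed
  have "walsh b * walsh b = (\<Sum>x\<in>UNIV. \<Sum>z\<in>UNIV. chi (g x) * chi (g (x + z)))"
    unfolding walsh_def g_def[symmetric] sum_product
  proof (rule sum.cong[OF refl])
    fix x
    show "(\<Sum>y\<in>UNIV. chi (g x) * chi (g y)) = (\<Sum>z\<in>UNIV. chi (g x) * chi (g (x + z)))"
      by (rule sum.reindex_bij_witness[of _ "\<lambda>y. x + y" "\<lambda>y. x + y"])
        (simp_all add: char2_add_self[OF char2] add.assoc[symmetric])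
  qed
  also have "\<dots> = (\<Sum>z\<in>UNIV. chi (g z) * (\<Sum>x\<in>UNIV. chi (polar x z)))"
    unfolding chi_g_add sum_distrib_left by (rule sum.swap)
  also have "\<dots> = real CARD('f) * (\<Sum>z\<in>rad. chi (g z))"
    unfolding sum_chi_polar
    by (simp add: if_distrib[of "\<lambda>v. _ * v"] sum.If_cases sum_distrib_left mult.commute cong: if_cong)
  finally show ?thesis
    unfolding g_def .
qed

lemma walsh_squared:
  "walsh b * walsh b = real CARD('f) * (if \<forall>z\<in>rad. f z + tr (b * z) = 0 then real (card rad) else 0)"
proof -
  have "(\<Sum>z\<in>rad. chi (f z + tr (b * z))) = (if \<forall>z\<in>rad. f z + tr (b * z) = 0 then real (card rad) else 0)"
  proof (rule sum_chi_additive[OF char2 add_mem_rad])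
    show "f z + tr (b * z) = 0 \<or> f z + tr (b * z) = 1" for z
      by (intro char2_add_0_or_1[OF char2] f_0_or_1 tr_0_or_1)
    fix x y assume "x \<in> rad" "y \<in> rad"
    then have "f (x + y) + (f x + f y) = 0"
      unfolding rad_def polar_def by (simp add: add.assoc)
    then have "f (x + y) = f x + f y"
      by (simp only: char2_add_eq_0_iff[OF char2])
    then show "f (x + y) + tr (b * (x + y)) = f x + tr (b * x) + (f y + tr (b * y))"
      by (simp add: tr_add distrib_left add_ac)
  qed
  then show ?thesis
    using walsh_squared_eq_sum_rad by simp
qed

text \<open>The counts follow from \<open>walsh b \<in> {0, s, -s}\<close>, \<open>\<Sum> walsh b = q\<close> and
  \<open>\<Sum> (walsh b)\<^sup>2 = q\<^sup>2\<close>, where \<open>q\<close> is the size of the field.\<close>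

lemma card_walsh_eq:
  assumes "s > 0" "eps = 1 \<or> eps = -1" and s_squared: "s * s = real CARD('f) * real (card rad)"
  shows "real (card {b. walsh b = eps * s}) = (real CARD('f) * real CARD('f) / (s * s)
           + eps * real CARD('f) / s) / 2"
proof -
  define P where "P = {b. walsh b = s}"
  define M where "M = {b. walsh b = - s}"
  have "walsh b * walsh b = 0 \<or> walsh b * walsh b = s * s" for b
    using walsh_squared[of b] s_squared by auto
  then have "walsh b = 0 \<or> walsh b = s \<or> walsh b = - s" for b
    by (metis mult_eq_0_iff square_eq_iff)
  then have walsh_ind: "walsh b = s * (of_bool (b \<in> P) - of_bool (b \<in> M))"
    and walsh_squared_ind: "walsh b * walsh b = s * s * (of_bool (b \<in> P) + of_bool (b \<in> M))" for b
    using \<open>s > 0\<close> by (auto simp: P_def M_def)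
  have card_P: "(\<Sum>b\<in>UNIV. of_bool (b \<in> P)) = real (card P)"
    and card_M: "(\<Sum>b\<in>UNIV. of_bool (b \<in> M)) = real (card M)"
    by simp_all
  have "s * (real (card P) - real (card M)) = real CARD('f)"
    using sum_walsh unfolding walsh_ind sum_distrib_left[symmetric] sum_subtractf card_P card_M .
  then have diff: "real (card P) - real (card M) = real CARD('f) / s"
    using \<open>s > 0\<close> by (simp add: field_simps)
  have "s * s * (real (card P) + real (card M)) = real CARD('f) * real CARD('f)"
    using sum_walsh_squared unfolding walsh_squared_ind sum_distrib_left[symmetric] sum.distrib card_P card_M .
  then have sum: "real (card P) + real (card M) = real CARD('f) * real CARD('f) / (s * s)"
    using \<open>s > 0\<close> by (simp add: field_simps)
  show ?thesis
    using assms(2) diff sum by (auto simp: P_def M_def field_simps)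
qed

lemma card_walsh_eq_two_power:
  assumes card: "CARD('f) = 2 ^ m" and card_rad: "card rad = 2 ^ (m - h)" and "h \<le> m"
    and "even l" "l \<le> m" and eps: "eps = 1 \<or> eps = -1"
  shows "real (card {b. walsh b = eps * 2 ^ (m - l div 2)})
       = (if h = l then (2 ^ l + eps * 2 ^ (l div 2)) / 2 else 0)"
proof -
  define s :: real where "s = 2 ^ (m - l div 2)"
  have "s > 0"
    by (simp add: s_def)
  have "l div 2 \<le> m"
    using \<open>l \<le> m\<close> by simp
  have "(m - l div 2) + (m - l div 2) = 2 * m - l"
    using \<open>even l\<close> \<open>l \<le> m\<close> by (auto elim!: evenE)
  then have s_squared: "s * s = 2 ^ (2 * m - l)"
    unfolding s_def by (metis power_add)
  have card_product: "real CARD('f) * real (card rad) = 2 ^ (2 * m - h)"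
    using card card_rad \<open>h \<le> m\<close> by (simp flip: power_add)
  show ?thesis
  proof (cases "h = l")
    case True
    have "s * s = real CARD('f) * real (card rad)"
      using True s_squared card_product by simp
    moreover have "real CARD('f) * real CARD('f) / (s * s) = 2 ^ l"
      using card \<open>l \<le> m\<close> unfolding s_squared
      by (simp add: field_simps flip: power_add)
    moreover have "eps * real CARD('f) / s = eps * 2 ^ (l div 2)"
      using card \<open>l div 2 \<le> m\<close> unfolding s_def by (simp add: field_simps flip: power_add)
    ultimately show ?thesis
      using card_walsh_eq[OF \<open>s > 0\<close> eps] True unfolding s_def by presburger
  next
    case False
    have "s * s \<noteq> real CARD('f) * real (card rad)"
      using False \<open>h \<le> m\<close> \<open>l \<le> m\<close> unfolding s_squared card_product by simp
    have "walsh b \<noteq> eps * s" for b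
      using walsh_squared[of b] \<open>s * s \<noteq> _\<close> \<open>s > 0\<close> eps by (auto split: if_splits)
    then have "{b. walsh b = eps * s} = {}"
      by blast
    then show ?thesis
      using False by (simp add: s_def)
  qed
qed

end

section \<open>The quadratic forms \<open>Q\<^sub>a\<close> and their polar forms\<close>

lemma char2_power_two_power_plus_one_add:
  assumes "(2::'f::field) = 0"
  shows "((x::'f) + y) ^ (2 ^ s + 1) = x ^ (2 ^ s + 1) + y ^ (2 ^ s + 1) + (x ^ (2 ^ s) * y + x * y ^ (2 ^ s))"
proof -
  have "(x + y) ^ (2 ^ s + 1) = (x ^ (2 ^ s) + y ^ (2 ^ s)) * (x + y)"
    by (simp add: char2_power_two_power_add[OF assms])
  then show ?thesis
    by (simp add: algebra_simps)
qed

lemma trace2_polar_power_two_power_plus_one: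
  assumes "(2::'f::{field,finite}) = 0"
  shows "trace2 c b (a * ((x::'f) + y) ^ (2 ^ s + 1)) + trace2 c b (a * x ^ (2 ^ s + 1))
       + trace2 c b (a * y ^ (2 ^ s + 1)) = trace2 c b (a * (x ^ (2 ^ s) * y + x * y ^ (2 ^ s)))"
proof -
  have "(A + B + C) + A + B = C + (A + A) + (B + B)" for A B C :: 'f
    by (simp add: add_ac)
  then have "(A + B + C) + A + B = C" for A B C :: 'f
    by (simp add: char2_add_self[OF assms])
  then show ?thesis
    unfolding char2_power_two_power_plus_one_add[OF assms] distrib_left trace2_add[OF assms] .
qed

locale quadratic_code =
  fixes m n d e k :: nat and p :: "'f::{field,finite}"
  assumes n_pos: "n > 0" and m_eq: "m = 2 * n"
    and gcd_n_d: "e = gcd n d" and gcd_m_d: "e = gcd m d"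
    and k_pos: "k > 0" and k_le: "k \<le> n div e"
    and card: "CARD('f) = 2 ^ m" and primitive: "primitive_elem p"
begin

lemma m_pos: "m > 0"
  using n_pos m_eq by simp

lemma char2: "(2::'f) = 0"
  using two_eq_zero_if_card_power2[OF card m_pos] .

lemma frobenius_m: "(x::'f) ^ (2 ^ m) = x"
  using power_two_power_eq_self_if_card[OF card] .

lemma e_pos: "e > 0"
  using gcd_n_d n_pos by simp

lemma e_dvd_n: "e dvd n" and e_dvd_d: "e dvd d"
  unfolding gcd_n_d by simp_all

lemma e_dvd_m: "e dvd m"
  unfolding gcd_m_d by simp

lemma odd_d_div_e: "odd (d div e)"
proof
  assume "even (d div e)"
  then have "2 * e dvd d"
    using e_dvd_d by (metis dvd_mult_div_cancel mult.commute mult_dvd_mono dvd_refl)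
  moreover have "2 * e dvd m"
    using e_dvd_n m_eq by simp
  ultimately have "2 * e dvd e"
    using gcd_m_d by simp
  then show False
    using e_pos by (simp add: dvd_imp_le)
qed

lemma coprime_n_div_e_d_div_e: "coprime (2 * (n div e)) (d div e)"
proof -
  have "coprime (n div e) (d div e)"
    using div_gcd_coprime[of n d] n_pos gcd_n_d by simp
  then show ?thesis
    using odd_d_div_e by simp
qed

text \<open>\<open>\<sigma> j\<close> is the exponent \<open>(n/e - j) d\<close> of the \<open>j\<close>-th term of \<open>Q\<^sub>a\<close>, reduced modulo \<open>m\<close>.\<close>

definition \<sigma> :: "nat \<Rightarrow> nat" where
  "\<sigma> j = ((n div e - j) * d) mod m"

lemma \<sigma>_less: "\<sigma> j < m"
  unfolding \<sigma>_def using m_pos by simp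

lemma e_dvd_\<sigma>: "e dvd \<sigma> j"
  unfolding \<sigma>_def using e_dvd_d e_dvd_m by (simp add: dvd_mod)

lemma \<sigma>_eq: "\<sigma> j = e * (((n div e - j) * (d div e)) mod (2 * (n div e)))"
proof -
  have "(n div e - j) * d = e * ((n div e - j) * (d div e))"
    using e_dvd_d by (simp add: mult.left_commute)
  moreover have "m = e * (2 * (n div e))"
    using e_dvd_n m_eq by (simp add: mult.left_commute)
  ultimately show ?thesis
    unfolding \<sigma>_def by (simp only: mod_mult_mult1)
qed

lemma \<sigma>_eq_iff:
  "\<sigma> j = \<sigma> j' \<longleftrightarrow> (n div e - j) mod (2 * (n div e)) = (n div e - j') mod (2 * (n div e))"
  using cong_mult_rcancel_nat[of "d div e" "2 * (n div e)" "n div e - j" "n div e - j'"]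
    coprime_n_div_e_d_div_e e_pos
  by (simp add: \<sigma>_eq cong_def coprime_commute)

lemma exponent_bounds:
  assumes "j \<in> {1..<k}"
  shows "0 < n div e - j" "n div e - j < n div e"
  using assms k_le by auto

lemma \<sigma>_neq_0:
  assumes "j \<in> {1..<k}"
  shows "\<sigma> j \<noteq> 0"
proof
  assume "\<sigma> j = 0"
  then have "\<sigma> j = \<sigma> (n div e)"
    by (simp add: \<sigma>_def)
  then show False
    using exponent_bounds[OF assms] unfolding \<sigma>_eq_iff by simp
qed

lemma \<sigma>_neq_n:
  assumes "j \<in> {1..<k}"
  shows "\<sigma> j \<noteq> n"
proof
  define N D where "N = n div e" and "D = d div e"
  assume "\<sigma> j = n"
  then have "e * (((N - j) * D) mod (2 * N)) = e * N"
    using e_dvd_n unfolding \<sigma>_eq N_def D_def by simp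
  then have "((N - j) * D) mod (2 * N) = N"
    using e_pos by simp
  then have "N dvd (N - j) * D"
    using dvd_mod_imp_dvd[of N "(N - j) * D" "2 * N"] by simp
  then have "N dvd N - j"
    using coprime_n_div_e_d_div_e by (simp add: coprime_dvd_mult_left_iff N_def D_def)
  then show False
    using exponent_bounds[OF assms] by (auto simp: N_def dest: dvd_imp_le)
qed

lemma \<sigma>_inj:
  assumes "j \<in> {1..<k}" "j' \<in> {1..<k}" "\<sigma> j = \<sigma> j'"
  shows "j = j'"
  using assms(3) exponent_bounds[OF assms(1)] exponent_bounds[OF assms(2)]
  unfolding \<sigma>_eq_iff by simp

lemma \<sigma>_add_neq_m:
  assumes "j \<in> {1..<k}" "j' \<in> {1..<k}"
  shows "\<sigma> j + \<sigma> j' \<noteq> m"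
proof
  define N D where "N = n div e" and "D = d div e"
  assume "\<sigma> j + \<sigma> j' = m"
  then have "e * (((N - j) * D) mod (2 * N) + ((N - j') * D) mod (2 * N)) = e * (2 * N)"
    using e_dvd_n m_eq unfolding \<sigma>_eq N_def D_def by (simp add: distrib_left mult.left_commute)
  then have "((N - j) * D) mod (2 * N) + ((N - j') * D) mod (2 * N) = 2 * N"
    using e_pos by simp
  then have "(((N - j) + (N - j')) * D) mod (2 * N) = (0 * D) mod (2 * N)"
    by (simp add: add_mult_distrib mod_add_eq[symmetric])
  then have "((N - j) + (N - j')) mod (2 * N) = 0"
    using cong_mult_rcancel_nat[of D "2 * N" "N - j + (N - j')" 0] coprime_n_div_e_d_div_e
    by (simp add: cong_def coprime_commute N_def D_def)
  then show False
    using exponent_bounds[OF assms(1)] exponent_bounds[OF assms(2)] by (simp add: N_def)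
qed


lemma power_exponent_\<sigma>: "(x::'f) ^ (2 ^ ((n div e - j) * d)) = x ^ (2 ^ \<sigma> j)"
  unfolding \<sigma>_def by (rule power_two_power_mod[OF frobenius_m])

lemma power_exponent_leading: "(x::'f) ^ (2 ^ (n * d div e)) = x ^ (2 ^ n)"
proof -
  obtain u where u: "d div e = 2 * u + 1"
    using odd_d_div_e oddE by blast
  have "n * d div e = n * (d div e)"
    using div_mult_swap[OF e_dvd_d] by simp
  also have "\<dots> = n + m * u"
    using u m_eq by (simp add: algebra_simps)
  finally have "(n * d div e) mod m = n"
    using m_eq n_pos by simp
  then show ?thesis
    using power_two_power_mod[OF frobenius_m, of x "n * d div e"] by simp
qed

text \<open>The linearized polynomial \<open>L\<^sub>a\<close> with \<open>B\<^sub>a(x, y) = Tr\<^sub>m\<^sub>/\<^sub>e(y L\<^sub>a(x))\<close>.\<close>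

definition L :: "(nat \<Rightarrow> 'f) \<Rightarrow> 'f \<Rightarrow> 'f" where
  "L a x = a 0 * x ^ (2 ^ n)
     + (\<Sum>j\<in>{1..<k}. a j * x ^ (2 ^ \<sigma> j) + a j ^ (2 ^ (m - \<sigma> j)) * x ^ (2 ^ (m - \<sigma> j)))"

text \<open>The Frobenius power \<open>2\<^sup>m\<^sup>-\<^sup>\<sigma>\<^sup>j\<close> fixes the trace and moves \<open>y\<^sup>2\<^sup>^\<^sup>\<sigma>\<^sup>j\<close> to \<open>y\<close>.\<close>

lemma trace2_polar_term:
  "trace2 m e (a * ((x::'f) ^ (2 ^ ((n div e - j) * d)) * y + x * y ^ (2 ^ ((n div e - j) * d))))
   = trace2 m e (y * (a * x ^ (2 ^ \<sigma> j) + a ^ (2 ^ (m - \<sigma> j)) * x ^ (2 ^ (m - \<sigma> j))))"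
proof -
  define s where "s = \<sigma> j"
  have "s < m" "e dvd m - s"
    using \<sigma>_less e_dvd_m e_dvd_\<sigma> by (simp_all add: s_def)
  have "trace2 m e (a * x * y ^ (2 ^ s)) = trace2 m e ((a * x * y ^ (2 ^ s)) ^ (2 ^ (m - s)))"
    using trace2_frobenius_dvd_eq[OF e_pos e_dvd_m frobenius_m \<open>e dvd m - s\<close>] by simp
  also have "(a * x * y ^ (2 ^ s)) ^ (2 ^ (m - s)) = a ^ (2 ^ (m - s)) * x ^ (2 ^ (m - s)) * y"
  proof -
    have "(y ^ (2 ^ s)) ^ (2 ^ (m - s)) = y"
      using \<open>s < m\<close> frobenius_m by (simp add: power_two_power_add)
    then show ?thesis
      by (simp add: power_mult_distrib)
  qed
  finally have "trace2 m e (a * x * y ^ (2 ^ s)) = trace2 m e (y * (a ^ (2 ^ (m - s)) * x ^ (2 ^ (m - s))))"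
    by (simp add: mult_ac)
  then show ?thesis
    unfolding power_exponent_\<sigma> s_def[symmetric]
    by (simp add: distrib_left trace2_add[OF char2] mult_ac)
qed

lemma trace2_polar_leading:
  assumes "a0 \<in> subfield2 n"
  shows "trace2 n e (a0 * ((x::'f) + y) ^ (2 ^ (n * d div e) + 1)) + trace2 n e (a0 * x ^ (2 ^ (n * d div e) + 1))
       + trace2 n e (a0 * y ^ (2 ^ (n * d div e) + 1)) = trace2 m e (y * (a0 * x ^ (2 ^ n)))"
proof -
  define w where "w = y * (a0 * x ^ (2 ^ n))"
  have "(x ^ (2 ^ n)) ^ (2 ^ n) = x"
    using frobenius_m m_eq by (simp add: power_two_power_add mult_2)
  then have "w ^ (2 ^ n) = y ^ (2 ^ n) * a0 * x"
    using assms unfolding w_def by (simp add: power_mult_distrib subfield2_def)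
  then have "w + w ^ (2 ^ n) = a0 * (x ^ (2 ^ n) * y + x * y ^ (2 ^ n))"
    unfolding w_def by (simp add: algebra_simps)
  then show ?thesis
    unfolding trace2_polar_power_two_power_plus_one[OF char2] power_exponent_leading m_eq
      trace2_double_degree[OF char2 e_pos e_dvd_n] w_def[symmetric] by simp
qed

lemma Bform_eq:
  fixes a :: "nat \<Rightarrow> 'f"
  assumes "a \<in> avecs n k"
  shows "Bform m n d e k a x y = trace2 m e (y * L a x)"
proof -
  define T0 where "T0 z = trace2 n e (a 0 * z ^ (2 ^ (n * d div e) + 1))" for z :: 'f
  define S where "S z = (\<Sum>j\<in>{1..<k}. trace2 m e (a j * z ^ (2 ^ ((n div e - j) * d) + 1)))" for z :: 'f
  define T1 where "T1 z = trace2 m e (a k * z)" for z :: 'f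
  have "Qform m n d e k a z = T0 z + S z + T1 z" for z
    unfolding Qform_def T0_def S_def T1_def ..
  then have "Bform m n d e k a x y
      = (T0 (x + y) + T0 x + T0 y) + (S (x + y) + S x + S y) + (T1 (x + y) + T1 x + T1 y)"
    unfolding Bform_def char2_diff[OF char2] by (simp add: add_ac)
  also have "T0 (x + y) + T0 x + T0 y = trace2 m e (y * (a 0 * x ^ (2 ^ n)))"
    unfolding T0_def using assms by (intro trace2_polar_leading) (simp add: avecs_def)
  also have "S (x + y) + S x + S y = (\<Sum>j\<in>{1..<k}. trace2 m e
      (y * (a j * x ^ (2 ^ \<sigma> j) + a j ^ (2 ^ (m - \<sigma> j)) * x ^ (2 ^ (m - \<sigma> j)))))"
    unfolding S_def sum.distrib[symmetric] trace2_polar_power_two_power_plus_one[OF char2] trace2_polar_term ..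
  also have "T1 (x + y) + T1 x + T1 y = (T1 x + T1 x) + (T1 y + T1 y)"
    unfolding T1_def distrib_left trace2_add[OF char2] by (simp add: add_ac)
  finally show ?thesis
    unfolding L_def distrib_left sum_distrib_left trace2_add[OF char2] trace2_sum[OF char2]
    by (simp add: char2_add_self[OF char2])
qed

lemma is_subfield_subfield2: "is_subfield (subfield2 e :: 'f set)"
  unfolding is_subfield_def subfield2_def
  by (auto simp: char2_power_two_power_add[OF char2] power_mult_distrib char2_uminus[OF char2] power_inverse)

lemma L_add: "L a (x + x') = L a x + L a x'"
  unfolding L_def char2_power_two_power_add[OF char2] by (simp add: algebra_simps sum.distrib)

lemma L_mult_subfield2:
  assumes "l \<in> subfield2 e"
  shows "L a (l * x) = l * L a x"
proof -
  have "l ^ (2 ^ s) = l" if "e dvd s" for s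
    using assms that unfolding subfield2_def by (simp add: power_two_power_fixed_dvd)
  then have "l ^ (2 ^ n) = l" "l ^ (2 ^ \<sigma> j) = l" "l ^ (2 ^ (m - \<sigma> j)) = l" for j
    using e_dvd_n e_dvd_\<sigma> e_dvd_m by simp_all
  then show ?thesis
    unfolding L_def power_mult_distrib by (simp add: algebra_simps sum_distrib_left)
qed

lemma radical_Bform:
  fixes a :: "nat \<Rightarrow> 'f"
  assumes "a \<in> avecs n k"
  shows "radical (Bform m n d e k a) = {x. L a x = 0}"
proof -
  have "(\<forall>y. trace2 m e (y * L a x) = 0) \<longleftrightarrow> L a x = 0" for x
    using trace2_nondegenerate[OF card e_pos e_dvd_m m_pos, of "L a x"] by auto
  then show ?thesis
    unfolding radical_def Bform_eq[OF assms] by auto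
qed

lemma card_radical_Bform:
  fixes a :: "nat \<Rightarrow> 'f"
  assumes "a \<in> avecs n k"
  shows "card (radical (Bform m n d e k a)) = 2 ^ (m - e * rankB m n d e k a)"
    and "e * rankB m n d e k a \<le> m"
proof -
  define D where "D = sub_dim (subfield2 e) (radical (Bform m n d e k a))"
  have "is_subspace (subfield2 e) {x. L a x = 0}"
    unfolding is_subspace_def using L_add L_mult_subfield2 by (auto simp: L_def power_0_left)
  then have "card (radical (Bform m n d e k a)) = card (subfield2 e :: 'f set) ^ D"
    unfolding D_def radical_Bform[OF assms] by (rule card_subspace[OF is_subfield_subfield2])
  also have "\<dots> = 2 ^ (e * D)"
    using card_subfield2[OF card m_pos e_pos e_dvd_m] by (simp add: power_mult)
  finally have card_rad: "card (radical (Bform m n d e k a)) = 2 ^ (e * D)" .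
  have "card (radical (Bform m n d e k a)) \<le> CARD('f)"
    by (rule card_mono) simp_all
  then have "e * D \<le> m"
    using card_rad card by simp
  moreover have "e * rankB m n d e k a = m - e * D"
    unfolding rankB_def D_def[symmetric] using e_dvd_m by (simp add: diff_mult_distrib2)
  ultimately show "card (radical (Bform m n d e k a)) = 2 ^ (m - e * rankB m n d e k a)"
    and "e * rankB m n d e k a \<le> m"
    using card_rad by simp_all
qed

lemma Qform_in_subfield2:
  fixes a :: "nat \<Rightarrow> 'f"
  assumes "a \<in> avecs n k"
  shows "Qform m n d e k a x ^ (2 ^ e) = Qform m n d e k a x"
proof -
  have "a 0 ^ (2 ^ n) = a 0"
    using assms by (simp add: avecs_def subfield2_def)
  moreover have "(x ^ (2 ^ n)) ^ (2 ^ n) = x"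
    using frobenius_m m_eq by (simp add: power_two_power_add mult_2)
  ultimately have "(a 0 * x ^ (2 ^ (n * d div e) + 1)) ^ (2 ^ n) = a 0 * x ^ (2 ^ (n * d div e) + 1)"
    unfolding power_exponent_leading power_add by (simp add: power_mult_distrib mult_ac)
  then show ?thesis
    unfolding Qform_def char2_power_two_power_add[OF char2] char2_power_two_power_sum[OF char2]
    using trace2_in_base_field[OF char2 e_pos e_dvd_n] trace2_in_base_field[OF char2 e_pos e_dvd_m frobenius_m]
    by simp
qed

text \<open>The codeword \<open>c\<^sub>a\<close> lists the values of \<open>boolean_form a\<close> at the nonzero points.\<close>

definition boolean_form :: "(nat \<Rightarrow> 'f) \<Rightarrow> 'f \<Rightarrow> 'f" where
  "boolean_form a x = trace2 e 1 (Qform m n d e k a x)"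

lemma boolean_form_0_or_1:
  "(a :: nat \<Rightarrow> 'f) \<in> avecs n k \<Longrightarrow> boolean_form a x = 0 \<or> boolean_form a x = 1"
  unfolding boolean_form_def by (rule trace2_absolute_0_or_1[OF char2 Qform_in_subfield2])

lemma boolean_form_at_zero [simp]: "boolean_form a 0 = 0"
  unfolding boolean_form_def Qform_def by (simp add: power_0_left)

lemma boolean_form_zero [simp]: "boolean_form (\<lambda>_. 0) x = 0"
  unfolding boolean_form_def Qform_def by simp

lemma boolean_form_polar:
  fixes a :: "nat \<Rightarrow> 'f"
  assumes "a \<in> avecs n k"
  shows "boolean_form a (x + y) + boolean_form a x + boolean_form a y = trace2 m 1 (y * L a x)"
proof -
  have "boolean_form a (x + y) + boolean_form a x + boolean_form a y
      = trace2 e 1 (Bform m n d e k a x y)"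
    unfolding boolean_form_def Bform_def char2_diff[OF char2] trace2_add[OF char2] ..
  also have "\<dots> = trace2 m 1 (y * L a x)"
    unfolding Bform_eq[OF assms] by (rule trace2_trans[OF char2 e_pos e_dvd_m])
  finally show ?thesis .
qed

lemma boolean_form_split:
  "boolean_form a x = boolean_form (a(k := 0)) x + trace2 m 1 (a k * x)"
proof -
  have "(\<Sum>j\<in>{1..<k}. trace2 m e ((a(k := 0)) j * x ^ (2 ^ ((n div e - j) * d) + 1)))
      = (\<Sum>j\<in>{1..<k}. trace2 m e (a j * x ^ (2 ^ ((n div e - j) * d) + 1)))"
    by (intro sum.cong) auto
  then have "Qform m n d e k a x = Qform m n d e k (a(k := 0)) x + trace2 m e (a k * x)"
    unfolding Qform_def using k_pos by simp
  then show ?thesis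
    unfolding boolean_form_def by (simp only: trace2_add[OF char2] trace2_trans[OF char2 e_pos e_dvd_m])
qed

lemma boolean_form_add:
  "boolean_form (\<lambda>j. a j + b j) x = boolean_form a x + boolean_form b x"
  unfolding boolean_form_def Qform_def
  by (simp add: distrib_right trace2_add[OF char2] sum.distrib add_ac)

lemma trace2_m_1_0_or_1: "trace2 m 1 (x::'f) = 0 \<or> trace2 m 1 x = 1"
  using trace2_absolute_0_or_1[OF char2 frobenius_m] .

lemma trace2_m_1_nondegenerate: "(z::'f) \<noteq> 0 \<Longrightarrow> \<exists>y. trace2 m 1 (y * z) \<noteq> 0"
  by (rule trace2_nondegenerate[OF card _ _ m_pos]) simp_all

lemma quadratic_boolean_function:
  fixes a :: "nat \<Rightarrow> 'f"
  assumes "a \<in> avecs n k"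
  shows "quadratic_boolean_function (boolean_form a) (trace2 m 1)"
proof
  show "boolean_form a (x + x' + y) + boolean_form a (x + x') + boolean_form a y
      = boolean_form a (x + y) + boolean_form a x + boolean_form a y
        + (boolean_form a (x' + y) + boolean_form a x' + boolean_form a y)" for x x' y
    unfolding boolean_form_polar[OF assms] L_add distrib_left trace2_add[OF char2] ..
qed (use char2 boolean_form_0_or_1[OF assms] trace2_m_1_0_or_1 trace2_add[OF char2]
       trace2_m_1_nondegenerate in auto)

lemma rad_boolean_form:
  fixes a :: "nat \<Rightarrow> 'f"
  assumes "a \<in> avecs n k"
  shows "quadratic_boolean_function.rad (boolean_form a) = radical (Bform m n d e k a)"
proof -
  interpret quadratic_boolean_function "boolean_form a" "trace2 m 1"
    by (rule quadratic_boolean_function[OF assms])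
  have "(\<forall>y. trace2 m 1 (y * L a x) = 0) \<longleftrightarrow> L a x = 0" for x
    using trace2_m_1_nondegenerate[of "L a x"] by auto
  then show ?thesis
    unfolding rad_def polar_def boolean_form_polar[OF assms] radical_Bform[OF assms] by auto
qed


section \<open>Injectivity of the encoding \<open>a \<mapsto> c\<^sub>a\<close>\<close>

text \<open>\<open>L\<^sub>a\<close> as a linearized polynomial: index \<open>(0, 0)\<close> is the leading term, \<open>(j, 0)\<close> and
  \<open>(j, 1)\<close> are the two monomials contributed by \<open>a\<^sub>j\<close>.\<close>

definition lin_index :: "(nat \<times> nat) set" where
  "lin_index = insert (0, 0) ({1..<k} \<times> {0, 1})"

definition lin_exp :: "nat \<times> nat \<Rightarrow> nat" where
  "lin_exp = (\<lambda>(j, t). if j = 0 then n else if t = 0 then \<sigma> j else m - \<sigma> j)"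

definition lin_coeff :: "(nat \<Rightarrow> 'f) \<Rightarrow> nat \<times> nat \<Rightarrow> 'f" where
  "lin_coeff a = (\<lambda>(j, t). if j = 0 then a 0 else if t = 0 then a j else a j ^ (2 ^ (m - \<sigma> j)))"

lemma L_eq_sum_lin_index: "L a x = (\<Sum>i\<in>lin_index. lin_coeff a i * x ^ (2 ^ lin_exp i))"
proof -
  have "(\<Sum>i\<in>{1..<k} \<times> {0, 1}. lin_coeff a i * x ^ (2 ^ lin_exp i))
      = (\<Sum>j\<in>{1..<k}. \<Sum>t\<in>{0::nat, 1}. lin_coeff a (j, t) * x ^ (2 ^ lin_exp (j, t)))"
    by (subst sum.cartesian_product) (simp add: split_def)
  also have "\<dots> = (\<Sum>j\<in>{1..<k}. a j * x ^ (2 ^ \<sigma> j) + a j ^ (2 ^ (m - \<sigma> j)) * x ^ (2 ^ (m - \<sigma> j)))"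
    by (intro sum.cong refl) (auto simp: lin_coeff_def lin_exp_def)
  finally show ?thesis
    unfolding L_def lin_index_def by (subst sum.insert) (auto simp: lin_coeff_def lin_exp_def)
qed

lemma inj_on_lin_exp: "inj_on lin_exp lin_index"
proof -
  have neq_n: "\<sigma> j \<noteq> n" "m - \<sigma> j \<noteq> n" if "Suc 0 \<le> j" "j < k" for j
    using \<sigma>_neq_n[of j] \<sigma>_less[of j] m_eq that by auto
  have neq_complement: "\<sigma> j \<noteq> m - \<sigma> j'" "m - \<sigma> j' \<noteq> \<sigma> j"
    if "Suc 0 \<le> j" "j < k" "Suc 0 \<le> j'" "j' < k" for j j'
    using \<sigma>_add_neq_m[of j j'] \<sigma>_less[of j] \<sigma>_less[of j'] that by auto
  have inj: "j = j'" if "\<sigma> j = \<sigma> j' \<or> m - \<sigma> j = m - \<sigma> j'"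
    "Suc 0 \<le> j" "j < k" "Suc 0 \<le> j'" "j' < k" for j j'
    using \<sigma>_inj[of j j'] \<sigma>_less[of j] \<sigma>_less[of j'] that by auto
  show ?thesis
    unfolding inj_on_def lin_index_def lin_exp_def
    by (auto simp: neq_n neq_complement neq_n[symmetric] intro: inj)
qed

lemma lin_exp_less: "i \<in> lin_index \<Longrightarrow> lin_exp i < m"
  using \<sigma>_neq_0 \<sigma>_less m_eq n_pos unfolding lin_index_def lin_exp_def by (auto split: if_splits)

lemma L_eq_zero_imp:
  assumes "\<And>x. L a x = 0" "j < k"
  shows "a j = 0"
proof -
  have vanish: "(\<Sum>i\<in>lin_index. lin_coeff a i * x ^ (2 ^ lin_exp i)) = 0" for x
    using assms(1) L_eq_sum_lin_index by simp
  have "(j, 0) \<in> lin_index"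
    using assms(2) by (cases "j = 0") (auto simp: lin_index_def)
  then have "lin_coeff a (j, 0) = 0"
    by (intro linearized_poly_coeff_eq_zero[OF card _ inj_on_lin_exp lin_exp_less vanish])
      (simp_all add: lin_index_def)
  then show ?thesis
    by (simp add: lin_coeff_def split: if_splits)
qed

lemma fun_upd_k_mem_avecs_iff: "(a :: nat \<Rightarrow> 'f)(k := b) \<in> avecs n k \<longleftrightarrow> a \<in> avecs n k"
  using k_pos by (auto simp: avecs_def)

lemma avecs_eq_zeroI:
  assumes "a \<in> avecs n k" "\<And>j. j \<le> k \<Longrightarrow> a j = 0"
  shows "a = (\<lambda>_. 0)"
proof
  show "a j = 0" for j
    using assms by (cases "j \<le> k") (auto simp: avecs_def)
qed

text \<open>If \<open>Tr\<^sub>e\<^sub>/\<^sub>1 \<circ> Q\<^sub>a\<close> vanishes, so does its polar form \<open>Tr\<^sub>m\<^sub>/\<^sub>1(y L\<^sub>a(x))\<close>, which kills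
  \<open>a\<^sub>0, \<dots>, a\<^sub>k\<^sub>-\<^sub>1\<close>; what remains is the linear form \<open>Tr\<^sub>m\<^sub>/\<^sub>1(a\<^sub>k x)\<close>.\<close>

lemma boolean_form_eq_zero_imp:
  fixes a :: "nat \<Rightarrow> 'f"
  assumes a: "a \<in> avecs n k" and vanish: "\<And>x. boolean_form a x = 0"
  shows "a = (\<lambda>_. 0)"
proof -
  have "trace2 m 1 (y * L a x) = 0" for x y
    using boolean_form_polar[OF a, of x y] vanish by simp
  then have "L a x = 0" for x
    using trace2_m_1_nondegenerate[of "L a x"] by auto
  then have below_k: "a j = 0" if "j < k" for j
    using L_eq_zero_imp that by blast
  then have "a(k := 0) = (\<lambda>_. 0)"
    using a fun_upd_k_mem_avecs_iff by (intro avecs_eq_zeroI) auto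
  then have "trace2 m 1 (x * a k) = 0" for x
    using boolean_form_split[of a x] vanish by (simp add: mult.commute)
  then have "a k = 0"
    using trace2_m_1_nondegenerate[of "a k"] by auto
  then show ?thesis
    using below_k a by (intro avecs_eq_zeroI) (auto simp: le_less)
qed

lemma bij_betw_powers_inverse_primitive:
  "bij_betw (\<lambda>i. inverse p ^ i) {..<2 ^ m - 1} (UNIV - {0})"
proof -
  have "inverse p \<noteq> 0"
    using primitive by (simp add: primitive_elem_def)
  have "(1::nat) < 2 ^ m"
    using m_pos one_less_power[of "2::nat" m] by simp
  have order: "y ^ (2 ^ m - 1) = 1" if "y \<noteq> 0" for y :: 'f
  proof -
    have "y * y ^ (2 ^ m - 1) = y * 1"
      using \<open>1 < 2 ^ m\<close> frobenius_m[of y] by (simp flip: power_Suc)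
    then show ?thesis
      using that by simp
  qed
  have image: "(\<lambda>i. inverse p ^ i) ` {..<2 ^ m - 1} = UNIV - {0}"
  proof
    show "(\<lambda>i. inverse p ^ i) ` {..<2 ^ m - 1} \<subseteq> UNIV - {0}"
      using \<open>inverse p \<noteq> 0\<close> by auto
    show "UNIV - {0} \<subseteq> (\<lambda>i. inverse p ^ i) ` {..<2 ^ m - 1}"
    proof
      fix x :: 'f assume "x \<in> UNIV - {0}"
      then obtain i where "inverse x = p ^ i"
        using primitive unfolding primitive_elem_def by (metis DiffD2 inverse_zero_imp_zero singletonI)
      then have "x = inverse p ^ i"
        by (metis inverse_inverse_eq power_inverse)
      also have "\<dots> = (inverse p ^ (2 ^ m - 1)) ^ (i div (2 ^ m - 1)) * inverse p ^ (i mod (2 ^ m - 1))"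
        by (simp add: power_mult[symmetric] power_add[symmetric])
      also have "\<dots> = inverse p ^ (i mod (2 ^ m - 1))"
        using order[OF \<open>inverse p \<noteq> 0\<close>] by simp
      finally show "x \<in> (\<lambda>i. inverse p ^ i) ` {..<2 ^ m - 1}"
        using \<open>1 < 2 ^ m\<close> by auto
    qed
  qed
  moreover have "card (UNIV - {0 :: 'f}) = card {..<(2::nat) ^ m - 1}"
    using card by (simp add: card_Diff_singleton)
  ultimately have "inj_on (\<lambda>i. inverse p ^ i) {..<2 ^ m - 1}"
    by (intro eq_card_imp_inj_on) simp_all
  then show ?thesis
    using image unfolding bij_betw_def by simp
qed

lemma DC_codeword:
  "real_of_int (DC m (codeword m n d e k p a)) = (\<Sum>x\<in>UNIV. chi (boolean_form a x)) - 1"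
proof -
  have "real_of_int (DC m (codeword m n d e k p a)) = (\<Sum>i<2 ^ m - 1. chi (boolean_form a (inverse p ^ i)))"
    unfolding DC_def of_int_sum by (intro sum.cong refl) (simp add: codeword_def boolean_form_def chi_def)
  also have "\<dots> = (\<Sum>x\<in>UNIV - {0}. chi (boolean_form a x))"
    by (rule sum.reindex_bij_betw[OF bij_betw_powers_inverse_primitive])
  finally show ?thesis
    by (simp add: sum_diff1)
qed

lemma inj_on_codeword: "inj_on (codeword m n d e k p) (avecs n k)"
proof (rule inj_onI)
  fix a b :: "nat \<Rightarrow> 'f"
  assume a: "a \<in> avecs n k" and b: "b \<in> avecs n k"
    and eq: "codeword m n d e k p a = codeword m n d e k p b"
  have same: "boolean_form a x = boolean_form b x" for x
  proof (cases "x = 0")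
    case False
    then obtain i where "i < 2 ^ m - 1" "x = inverse p ^ i"
      using bij_betw_powers_inverse_primitive by (auto simp: bij_betw_def)
    then show ?thesis
      using fun_cong[OF eq, of i] by (simp add: codeword_def boolean_form_def)
  qed simp
  have "(\<lambda>j. a j + b j) \<in> avecs n k"
    using a b unfolding avecs_def subfield2_def by (auto simp: char2_power_two_power_add[OF char2])
  moreover have "boolean_form (\<lambda>j. a j + b j) x = 0" for x
    unfolding boolean_form_add same by (rule char2_add_self[OF char2])
  ultimately have "(\<lambda>j. a j + b j) = (\<lambda>_. 0)"
    by (rule boolean_form_eq_zero_imp)
  then show "a = b"
    by (metis char2_add_eq_0_iff[OF char2] ext)
qed

lemma codeword_eq_zero_iff:
  assumes "(a :: nat \<Rightarrow> 'f) \<in> avecs n k"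
  shows "codeword m n d e k p a = (\<lambda>_. 0) \<longleftrightarrow> a = (\<lambda>_. 0)"
proof -
  have "(\<lambda>_. 0) \<in> (avecs n k :: (nat \<Rightarrow> 'f) set)"
    by (simp add: avecs_def subfield2_def power_0_left)
  moreover have "codeword m n d e k p (\<lambda>_. 0 :: 'f) = (\<lambda>_. 0)"
    by (simp add: codeword_def fun_eq_iff Qform_def)
  ultimately show ?thesis
    using inj_onD[OF inj_on_codeword _ assms] by metis
qed

end

section \<open>Counting codewords\<close>

lemma card_eq_sum_card_fun_upd:
  fixes S :: "('a \<Rightarrow> 'b::zero) set"
  assumes "finite S" and closed: "\<And>f b. f(k := b) \<in> S \<longleftrightarrow> f \<in> S"
  shows "card {f \<in> S. P f} = (\<Sum>q\<in>{q \<in> S. q k = 0}. card {b. P (q(k := b))})"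
proof -
  define Q where "Q = {q \<in> S. q k = 0}"
  define B where "B q = {b. P (q(k := b))}" for q
  have "{f \<in> S. P f} = (\<lambda>(q, b). q(k := b)) ` (SIGMA q:Q. B q)"
  proof (intro equalityI subsetI)
    fix f assume "f \<in> {f \<in> S. P f}"
    then have "(f(k := 0), f k) \<in> (SIGMA q:Q. B q)"
      using closed[of f 0] by (simp add: Q_def B_def)
    then show "f \<in> (\<lambda>(q, b). q(k := b)) ` (SIGMA q:Q. B q)"
      by (rule rev_image_eqI) simp
  qed (use closed in \<open>auto simp: Q_def B_def\<close>)
  moreover have "inj_on (\<lambda>(q, b). q(k := b)) (SIGMA q:Q. B q)"
  proof (rule inj_onI, clarsimp)
    fix q b q' b' assume "q \<in> Q" "q' \<in> Q" and eq: "q(k := b) = q'(k := b')"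
    have "q j = q' j" for j
      using fun_cong[OF eq, of j] \<open>q \<in> Q\<close> \<open>q' \<in> Q\<close> by (cases "j = k") (simp_all add: Q_def)
    then show "q = q' \<and> b = b'"
      using fun_cong[OF eq, of k] by auto
  qed
  moreover have "finite (B q)" if "q \<in> Q" for q
  proof (rule finite_subset)
    show "B q \<subseteq> (\<lambda>b. q(k := b)) -` S"
      using that closed by (auto simp: Q_def)
    show "finite ((\<lambda>b. q(k := b)) -` S)"
      by (rule finite_vimageI[OF \<open>finite S\<close>]) (simp add: inj_on_def fun_upd_eqD)
  qed
  ultimately show ?thesis
    using \<open>finite S\<close> by (simp add: card_image Q_def B_def)
qed

context quadratic_code
begin

lemma finite_avecs: "finite (avecs n k :: (nat \<Rightarrow> 'f) set)"
proof (rule finite_subset)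
  show "avecs n k \<subseteq> (\<lambda>g j. if j \<le> k then g j else 0) ` PiE {..k} (\<lambda>_. UNIV :: 'f set)"
  proof
    fix a :: "nat \<Rightarrow> 'f" assume "a \<in> avecs n k"
    then have "a = (\<lambda>j. if j \<le> k then restrict a {..k} j else 0)"
      by (auto simp: avecs_def)
    moreover have "restrict a {..k} \<in> PiE {..k} (\<lambda>_. UNIV)"
      by simp
    ultimately show "a \<in> (\<lambda>g j. if j \<le> k then g j else 0) ` PiE {..k} (\<lambda>_. UNIV)"
      by blast
  qed
qed (simp add: finite_PiE)

lemma rankB_fun_upd_k:
  assumes "(a :: nat \<Rightarrow> 'f) \<in> avecs n k"
  shows "rankB m n d e k (a(k := b)) = rankB m n d e k a"
proof -
  have "L (a(k := b)) = L a"
    unfolding L_def using k_pos by (intro ext) simp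
  moreover have "a(k := b) \<in> avecs n k"
    using assms fun_upd_k_mem_avecs_iff by simp
  ultimately have "Bform m n d e k (a(k := b)) = Bform m n d e k a"
    using assms by (intro ext) (simp add: Bform_eq)
  then show ?thesis
    unfolding rankB_def by simp
qed

lemma DC_codeword_fun_upd_k_eq_iff:
  fixes q :: "nat \<Rightarrow> 'f" and eps :: int
  assumes "q \<in> avecs n k" "q k = 0"
  shows "DC m (codeword m n d e k p (q(k := b))) = -1 + eps * 2 ^ t
    \<longleftrightarrow> quadratic_boolean_function.walsh (boolean_form q) (trace2 m 1) b = of_int eps * 2 ^ t"
proof -
  interpret quadratic_boolean_function "boolean_form q" "trace2 m 1"
    by (rule quadratic_boolean_function[OF assms(1)])
  have "(q(k := b))(k := 0) = q"
    using assms(2) by auto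
  then have "real_of_int (DC m (codeword m n d e k p (q(k := b)))) = walsh b - 1"
    unfolding DC_codeword walsh_def using boolean_form_split[of "q(k := b)"] by simp
  moreover have "DC m (codeword m n d e k p (q(k := b))) = -1 + eps * 2 ^ t
      \<longleftrightarrow> real_of_int (DC m (codeword m n d e k p (q(k := b)))) = real_of_int (-1 + eps * 2 ^ t)"
    by (simp only: of_int_eq_iff)
  ultimately show ?thesis
    by simp
qed

lemma card_codeword_fun_upd_k:
  fixes q :: "nat \<Rightarrow> 'f" and eps :: int
  assumes q: "q \<in> avecs n k" "q k = 0" and "even r" "r \<le> m div e" and eps: "eps \<in> {1, -1}"
  shows "real (card {b. codeword m n d e k p (q(k := b)) \<noteq> (\<lambda>_. 0)
             \<and> DC m (codeword m n d e k p (q(k := b))) = -1 + eps * 2 ^ (m - e * r div 2)})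
       = (if rankB m n d e k q = r \<and> (\<exists>j<k. q j \<noteq> 0)
          then (2 ^ (e * r) + of_int eps * 2 ^ (e * r div 2)) / 2 else 0)"
proof -
  interpret quadratic_boolean_function "boolean_form q" "trace2 m 1"
    by (rule quadratic_boolean_function[OF q(1)])
  note DC_iff = DC_codeword_fun_upd_k_eq_iff[OF q, where eps = eps and t = "m - e * r div 2"]
  have nonzero_iff: "codeword m n d e k p (q(k := b)) \<noteq> (\<lambda>_. 0) \<longleftrightarrow> q(k := b) \<noteq> (\<lambda>_. 0)" for b
    using codeword_eq_zero_iff fun_upd_k_mem_avecs_iff q(1) by blast
  show ?thesis
  proof (cases "\<exists>j<k. q j \<noteq> 0")
    case True
    then have "q(k := b) \<noteq> (\<lambda>_. 0)" for b
      by (auto simp: fun_eq_iff)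
    moreover have "card rad = 2 ^ (m - e * rankB m n d e k q)"
      using card_radical_Bform(1)[OF q(1)] rad_boolean_form[OF q(1)] by simp
    moreover have "e * r \<le> m"
      using \<open>r \<le> m div e\<close> e_dvd_m mult_le_mono2[of r "m div e" e] by simp
    moreover have "e * rankB m n d e k q = e * r \<longleftrightarrow> rankB m n d e k q = r"
      using e_pos by simp
    ultimately show ?thesis
      using card_walsh_eq_two_power[OF card _ card_radical_Bform(2)[OF q(1)], of "e * r" "of_int eps"]
        True eps \<open>even r\<close> nonzero_iff DC_iff by auto
  next
    case False
    then have "q = (\<lambda>_. 0)"
      using q by (intro avecs_eq_zeroI) (auto simp: le_less)
    have "walsh b \<noteq> of_int eps * 2 ^ (m - e * r div 2)" if "q(k := b) \<noteq> (\<lambda>_. 0)" for b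
    proof -
      have "walsh b = (\<Sum>x\<in>UNIV. chi (trace2 m 1 (x * b)))"
        unfolding walsh_def using \<open>q = (\<lambda>_. 0)\<close> by (simp add: mult.commute)
      also have "\<dots> = 0"
        using sum_chi_tr that \<open>q = (\<lambda>_. 0)\<close> by (auto simp: fun_upd_def)
      finally show ?thesis
        using eps by auto
    qed
    then have empty: "{b. codeword m n d e k p (q(k := b)) \<noteq> (\<lambda>_. 0)
             \<and> DC m (codeword m n d e k p (q(k := b))) = -1 + eps * 2 ^ (m - e * r div 2)} = {}"
      using nonzero_iff DC_iff by blast
    show ?thesis
      unfolding empty using False by auto
  qed
qed


theorem card_codewords_DC_eq:
  fixes eps :: int
  assumes "even r" "r \<le> m div e" "eps \<in> {1, -1}"
  shows "real (card {c \<in> code m n d e k p. c \<noteq> (\<lambda>_. 0) \<and>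
                DC m c = -1 + eps * 2 ^ (m - e * r div 2)})
       = (1/2::real) * (2 ^ (e * r) + of_int eps * 2 ^ (e * r div 2))
         * (real (card {a \<in> (avecs n k :: (nat \<Rightarrow> 'f) set). rankB m n d e k a = r \<and> (\<exists>j<k. a j \<noteq> 0)}) / 2 ^ m)"
proof -
  define good where "good q \<longleftrightarrow> rankB m n d e k q = r \<and> (\<exists>j<k. q j \<noteq> 0)" for q :: "nat \<Rightarrow> 'f"
  define Q :: "(nat \<Rightarrow> 'f) set" where "Q = {q \<in> avecs n k. q k = 0}"
  define has_DC where "has_DC c \<longleftrightarrow> c \<noteq> (\<lambda>_. 0) \<and> DC m c = -1 + eps * 2 ^ (m - e * r div 2)"
    for c :: "nat \<Rightarrow> 'f"
  have "card {c \<in> code m n d e k p. has_DC c} = card {a \<in> avecs n k. has_DC (codeword m n d e k p a)}"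
    unfolding code_def using inj_on_codeword
    by (subst card_image[symmetric]) (auto intro: inj_on_subset intro!: arg_cong[where f = card])
  also have "\<dots> = (\<Sum>q\<in>Q. card {b. has_DC (codeword m n d e k p (q(k := b)))})"
    unfolding Q_def by (rule card_eq_sum_card_fun_upd[OF finite_avecs fun_upd_k_mem_avecs_iff])
  finally have lhs: "real (card {c \<in> code m n d e k p. has_DC c})
      = (\<Sum>q\<in>Q. if good q then (2 ^ (e * r) + of_int eps * 2 ^ (e * r div 2)) / 2 else 0)"
    unfolding has_DC_def good_def using card_codeword_fun_upd_k[OF _ _ assms] by (simp add: Q_def)
  have "card {a \<in> avecs n k. good a} = (\<Sum>q\<in>Q. card {b::'f. good (q(k := b))})"
    unfolding Q_def by (rule card_eq_sum_card_fun_upd[OF finite_avecs fun_upd_k_mem_avecs_iff])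
  also have "\<dots> = (\<Sum>q\<in>Q. if good q then 2 ^ m else 0)"
  proof (rule sum.cong[OF refl])
    fix q assume "q \<in> Q"
    then have "good (q(k := b)) \<longleftrightarrow> good q" for b
      unfolding good_def using rankB_fun_upd_k[of q b] by (auto simp: Q_def)
    then have "{b. good (q(k := b))} = (if good q then UNIV else {})"
      by auto
    then show "card {b. good (q(k := b))} = (if good q then 2 ^ m else 0)"
      using card by simp
  qed
  finally have rhs: "real (card {a \<in> avecs n k. good a}) = (\<Sum>q\<in>Q. if good q then 2 ^ m else 0)"
    by (simp add: if_distrib[of real] cong: if_cong)
  have "finite Q"
    using finite_avecs by (simp add: Q_def)
  then have count: "(\<Sum>q\<in>Q. if good q then c else 0) = c * real (card {q \<in> Q. good q})" for c :: real
    by (simp add: sum.If_cases Int_def)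
  show ?thesis
    using lhs rhs
    unfolding has_DC_def[symmetric] good_def[symmetric]
    by (simp add: count)
qed

end

theorem theorem8p1:
  fixes m n d e k r :: nat and eps :: int and p :: "'f::{field,finite}"
  assumes "m > 0" "n > 0" "d > 0" "e > 0" "k > 0"
    and "m = 2 * n" and "e = gcd n d" and "e = gcd m d"
    and "1 \<le> k" and "k \<le> n div e"
    and "card (UNIV :: 'f set) = 2 ^ m"
    and "primitive_elem p"
    and "even r" and "r \<le> m div e"
    and "eps \<in> {1, -1}"
  shows "real (card {c \<in> code m n d e k p. c \<noteq> (\<lambda>_. 0) \<and>
                DC m c = -1 + eps * 2 ^ (m - e * r div 2)})
       = (1/2::real) * (2 ^ (e * r) + of_int eps * 2 ^ (e * r div 2))
         * (real (card {a \<in> (avecs n k :: (nat \<Rightarrow> 'f) set). rankB m n d e k a = r \<and> (\<exists>j<k. a j \<noteq> 0)}) / 2 ^ m)"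
proof -
  interpret quadratic_code m n d e k p
    by unfold_locales (use assms in auto)
  show ?thesis
    using assms(13-15) by (rule card_codewords_DC_eq)
qed

end
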